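(* For any Poisson $H$-pseudoalgebra $V$ and $a_1,\dots,a_m,b_1,\dots,b_n\in V$, $[(a_1\cdots a_m)*(b_1\cdots b_n)]=\sum_{i=1}^m\sum_{j=1}^n\epsilon_{ij}\,(a_1\cdots a_{i-1}a_{i+1}\cdots a_m)\,[a_i*b_j]\,(b_1\cdots b_{j-1}b_{j+1}\cdots b_n)$, where $\epsilon_{ij}=(-1)^{p(a_i)(p(a_{i+1})+\dots+p(a_m))+p(b_j)(p(b_1)+\dots+p(b_{j-1}))}$.
   Context: $H$ is a cocommutative Hopf algebra over a field $\mathbb F$ of characteristic $0$ (purely even), coproduct $\Delta(h)=h_{(1)}\otimes h_{(2)}$, antipode $S$, $h_{(1)}\otimes h_{(-2)}:=(\mathrm{id}\otimes S)\Delta(h)$. $(H\otimes H)\otimes_HV$ is the quotient of $H\otimes H\otimes V$ by $(fh_{(1)}\otimes gh_{(2)})\otimes e=(f\otimes g)\otimes he$. A Poisson $H$-pseudoalgebra is a vector superspace $V$ (parity $p$) with a left $H$-module structure, an even supercommutative associative product with $h(ab)=(h_{(1)}a)(h_{(2)}b)$, and an even pseudobracket $[a*b]\in(H\otimes H)\otimes_HV$ making $V$ a Lie $H$-pseudoalgebra ($H$-bilinearity $[fa*gb]=((f\otimes g)\otimes_H1)[a*b]$, skewsymmetry and Jacobi identity) and satisfying $[a*bc]=[a*b]c+(-1)^{p(b)p(c)}[a*c]b$. For $a,c\in V$ and $B=(f\otimes g)\otimes_Hb$, the products are $aB:=(f_{(1)}\otimes g)\otimes_H(f_{(-2)}a)b$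 and $Bc:=(f\otimes g_{(1)})\otimes_Hb(g_{(-2)}c)$, extended linearly; they are well defined and satisfy $(aB)c=a(Bc)$, which gives meaning to the triple products in the claim (empty products of elements of $V$ being omitted). *)

theory Defs
  imports Main "HOL-Library.Function_Algebras"
begin

text \<open>Elements of a tensor product are represented by finite lists of simple tensors
(scalars being absorbed into the factors); the list is mapped into the free vector space
over the product set (finitely supported functions into the field), and two lists
represent the same tensor iff their difference lies in the span of the defining
relations (multilinearity in each slot, and for the tensor products over H the
balancing relation).\<close>

definition fsingle :: "'a \<Rightarrow> 'k::zero \<Rightarrow> 'a \<Rightarrow> 'k" where
  "fsingle x c = (\<lambda>y. if y = x then c else 0)"

definition flist :: "'a list \<Rightarrow> 'a \<Rightarrow> 'k::comm_ring_1" where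
  "flist xs = (\<Sum>x\<leftarrow>xs. fsingle x 1)"

inductive_set lspan :: "('a \<Rightarrow> 'k::field) set \<Rightarrow> ('a \<Rightarrow> 'k) set"
  for G :: "('a \<Rightarrow> 'k) set" where
  lspan_zero: "0 \<in> lspan G"
| lspan_gen: "g \<in> G \<Longrightarrow> g \<in> lspan G"
| lspan_add: "x \<in> lspan G \<Longrightarrow> y \<in> lspan G \<Longrightarrow> x + y \<in> lspan G"
| lspan_smult: "x \<in> lspan G \<Longrightarrow> (\<lambda>z. c * x z) \<in> lspan G"

text \<open>Linearity relations in one slot; \<open>e\<close> embeds the slot into the product set.\<close>
definition rel_slot :: "('a \<Rightarrow> 'a \<Rightarrow> 'a) \<Rightarrow> ('k \<Rightarrow> 'a \<Rightarrow> 'a) \<Rightarrow> ('a \<Rightarrow> 'b)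
    \<Rightarrow> ('b \<Rightarrow> 'k::field) set" where
  "rel_slot ad sm e =
     {fsingle (e (ad x y)) 1 - fsingle (e x) 1 - fsingle (e y) 1 | x y. True} \<union>
     {fsingle (e (sm c x)) 1 - fsingle (e x) c | c x. True}"

definition rel_HH :: "('k::field \<Rightarrow> 'h::ring_1 \<Rightarrow> 'h) \<Rightarrow> ('h \<times> 'h \<Rightarrow> 'k) set" where
  "rel_HH sH = (\<Union>y. rel_slot (+) sH (\<lambda>x. (x, y))) \<union> (\<Union>x. rel_slot (+) sH (\<lambda>y. (x, y)))"

definition eq_HH :: "('k::field \<Rightarrow> 'h::ring_1 \<Rightarrow> 'h) \<Rightarrow> ('h \<times> 'h) list \<Rightarrow> ('h \<times> 'h) list \<Rightarrow> bool" where
  "eq_HH sH X Y \<longleftrightarrow> (flist X - flist Y :: 'h \<times> 'h \<Rightarrow> 'k) \<in> lspan (rel_HH sH)"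

definition rel_HHH :: "('k::field \<Rightarrow> 'h::ring_1 \<Rightarrow> 'h) \<Rightarrow> ('h \<times> 'h \<times> 'h \<Rightarrow> 'k) set" where
  "rel_HHH sH = (\<Union>y z. rel_slot (+) sH (\<lambda>x. (x, y, z))) \<union> (\<Union>x z. rel_slot (+) sH (\<lambda>y. (x, y, z)))
      \<union> (\<Union>x y. rel_slot (+) sH (\<lambda>z. (x, y, z)))"

definition eq_HHH :: "('k::field \<Rightarrow> 'h::ring_1 \<Rightarrow> 'h) \<Rightarrow> ('h \<times> 'h \<times> 'h) list \<Rightarrow> ('h \<times> 'h \<times> 'h) list \<Rightarrow> bool" where
  "eq_HHH sH X Y \<longleftrightarrow> (flist X - flist Y :: 'h \<times> 'h \<times> 'h \<Rightarrow> 'k) \<in> lspan (rel_HHH sH)"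

text \<open>\<open>sH\<close>: scalar multiplication of the field on H; ring structure of H from the class
\<open>ring_1\<close>; \<open>cop h\<close>: a (Sweedler) representative of \<open>\<Delta>(h) \<in> H \<otimes> H\<close>; \<open>eps\<close>: counit;
\<open>S\<close>: antipode.\<close>
definition cocomm_hopf :: "('k::field_char_0 \<Rightarrow> 'h::ring_1 \<Rightarrow> 'h) \<Rightarrow> ('h \<Rightarrow> ('h \<times> 'h) list)
    \<Rightarrow> ('h \<Rightarrow> 'k) \<Rightarrow> ('h \<Rightarrow> 'h) \<Rightarrow> bool" where
  "cocomm_hopf sH cop eps S \<longleftrightarrow>
    (\<forall>c x y. sH c (x + y) = sH c x + sH c y) \<and>
    (\<forall>c d x. sH (c + d) x = sH c x + sH d x) \<and>
    (\<forall>c d x. sH (c * d) x = sH c (sH d x)) \<and>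
    (\<forall>x. sH 1 x = x) \<and>
    (\<forall>c x y. sH c (x * y) = sH c x * y \<and> sH c (x * y) = x * sH c y) \<and>
    (\<forall>x y. eq_HH sH (cop (x + y)) (cop x @ cop y)) \<and>
    (\<forall>c x. eq_HH sH (cop (sH c x)) (map (\<lambda>(u, v). (sH c u, v)) (cop x))) \<and>
    (\<forall>h. eq_HHH sH (concat (map (\<lambda>(x, y). map (\<lambda>(x1, x2). (x1, x2, y)) (cop x)) (cop h)))
                   (concat (map (\<lambda>(x, y). map (\<lambda>(y1, y2). (x, y1, y2)) (cop y)) (cop h)))) \<and>
    (\<forall>x y. eps (x + y) = eps x + eps y) \<and>
    (\<forall>c x. eps (sH c x) = c * eps x) \<and>
    (\<forall>h. (\<Sum>(x, y)\<leftarrow>cop h. sH (eps x) y) = h) \<and>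
    (\<forall>h. (\<Sum>(x, y)\<leftarrow>cop h. sH (eps y) x) = h) \<and>
    (\<forall>g h. eq_HH sH (cop (g * h))
        (concat (map (\<lambda>(x, y). map (\<lambda>(x', y'). (x * x', y * y')) (cop h)) (cop g)))) \<and>
    eq_HH sH (cop 1) [(1, 1)] \<and>
    (\<forall>g h. eps (g * h) = eps g * eps h) \<and> eps 1 = 1 \<and>
    (\<forall>x y. S (x + y) = S x + S y) \<and>
    (\<forall>c x. S (sH c x) = sH c (S x)) \<and>
    (\<forall>h. (\<Sum>(x, y)\<leftarrow>cop h. S x * y) = sH (eps h) 1) \<and>
    (\<forall>h. (\<Sum>(x, y)\<leftarrow>cop h. x * S y) = sH (eps h) 1) \<and>
    (\<forall>h. eq_HH sH (cop h) (map prod.swap (cop h)))"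

definition rel_T :: "('k::field \<Rightarrow> 'h::ring_1 \<Rightarrow> 'h) \<Rightarrow> ('h \<Rightarrow> ('h \<times> 'h) list)
    \<Rightarrow> ('k \<Rightarrow> 'v::ab_group_add \<Rightarrow> 'v) \<Rightarrow> ('h \<Rightarrow> 'v \<Rightarrow> 'v) \<Rightarrow> ('h \<times> 'h \<times> 'v \<Rightarrow> 'k) set" where
  "rel_T sH cop sV act =
     (\<Union>y v. rel_slot (+) sH (\<lambda>x. (x, y, v))) \<union> (\<Union>x v. rel_slot (+) sH (\<lambda>y. (x, y, v)))
     \<union> (\<Union>x y. rel_slot (+) sV (\<lambda>v. (x, y, v)))
     \<union> {flist (map (\<lambda>(x, y). (f * x, g * y, v)) (cop h)) - fsingle (f, g, act h v) 1 | f g h v. True}"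

definition eq_T :: "('k::field \<Rightarrow> 'h::ring_1 \<Rightarrow> 'h) \<Rightarrow> ('h \<Rightarrow> ('h \<times> 'h) list)
    \<Rightarrow> ('k \<Rightarrow> 'v::ab_group_add \<Rightarrow> 'v) \<Rightarrow> ('h \<Rightarrow> 'v \<Rightarrow> 'v)
    \<Rightarrow> ('h \<times> 'h \<times> 'v) list \<Rightarrow> ('h \<times> 'h \<times> 'v) list \<Rightarrow> bool" where
  "eq_T sH cop sV act X Y \<longleftrightarrow> (flist X - flist Y :: 'h \<times> 'h \<times> 'v \<Rightarrow> 'k) \<in> lspan (rel_T sH cop sV act)"

definition rel_T4 :: "('k::field \<Rightarrow> 'h::ring_1 \<Rightarrow> 'h) \<Rightarrow> ('h \<Rightarrow> ('h \<times> 'h) list)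
    \<Rightarrow> ('k \<Rightarrow> 'v::ab_group_add \<Rightarrow> 'v) \<Rightarrow> ('h \<Rightarrow> 'v \<Rightarrow> 'v) \<Rightarrow> ('h \<times> 'h \<times> 'h \<times> 'v \<Rightarrow> 'k) set" where
  "rel_T4 sH cop sV act =
     (\<Union>y z v. rel_slot (+) sH (\<lambda>x. (x, y, z, v))) \<union> (\<Union>x z v. rel_slot (+) sH (\<lambda>y. (x, y, z, v)))
     \<union> (\<Union>x y v. rel_slot (+) sH (\<lambda>z. (x, y, z, v))) \<union> (\<Union>x y z. rel_slot (+) sV (\<lambda>v. (x, y, z, v)))
     \<union> {flist (concat (map (\<lambda>(x, y). map (\<lambda>(y1, y2). (f * x, g * y1, k * y2, v)) (cop y)) (cop h)))
          - fsingle (f, g, k, act h v) 1 | f g k h v. True}"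

definition eq_T4 :: "('k::field \<Rightarrow> 'h::ring_1 \<Rightarrow> 'h) \<Rightarrow> ('h \<Rightarrow> ('h \<times> 'h) list)
    \<Rightarrow> ('k \<Rightarrow> 'v::ab_group_add \<Rightarrow> 'v) \<Rightarrow> ('h \<Rightarrow> 'v \<Rightarrow> 'v)
    \<Rightarrow> ('h \<times> 'h \<times> 'h \<times> 'v) list \<Rightarrow> ('h \<times> 'h \<times> 'h \<times> 'v) list \<Rightarrow> bool" where
  "eq_T4 sH cop sV act X Y \<longleftrightarrow>
     (flist X - flist Y :: 'h \<times> 'h \<times> 'h \<times> 'v \<Rightarrow> 'k) \<in> lspan (rel_T4 sH cop sV act)"

definition tmap2 :: "'h::times \<Rightarrow> 'h \<Rightarrow> ('h \<times> 'h \<times> 'v) list \<Rightarrow> ('h \<times> 'h \<times> 'v) list" where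
  "tmap2 f g X = map (\<lambda>(x, y, v). (f * x, g * y, v)) X"

definition tscal :: "('k \<Rightarrow> 'v \<Rightarrow> 'v) \<Rightarrow> 'k \<Rightarrow> ('h \<times> 'h \<times> 'v) list \<Rightarrow> ('h \<times> 'h \<times> 'v) list" where
  "tscal sV c X = map (\<lambda>(x, y, v). (x, y, sV c v)) X"

definition tswap :: "('h \<times> 'h \<times> 'v) list \<Rightarrow> ('h \<times> 'h \<times> 'v) list" where
  "tswap X = map (\<lambda>(x, y, v). (y, x, v)) X"

definition tscal4 :: "('k \<Rightarrow> 'v \<Rightarrow> 'v) \<Rightarrow> 'k \<Rightarrow> ('h \<times> 'h \<times> 'h \<times> 'v) list \<Rightarrow> ('h \<times> 'h \<times> 'h \<times> 'v) list" where
  "tscal4 sV c X = map (\<lambda>(x, y, z, v). (x, y, z, sV c v)) X"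

definition tswap12 :: "('h \<times> 'h \<times> 'h \<times> 'v) list \<Rightarrow> ('h \<times> 'h \<times> 'h \<times> 'v) list" where
  "tswap12 X = map (\<lambda>(x, y, z, v). (y, x, z, v)) X"

text \<open>\<open>a B\<close> with \<open>a ((f \<otimes> g) \<otimes>_H b) = (f_(1) \<otimes> g) \<otimes>_H (f_(-2) a) b\<close>.\<close>
definition lmulT :: "('h \<Rightarrow> ('h \<times> 'h) list) \<Rightarrow> ('h \<Rightarrow> 'h) \<Rightarrow> ('h \<Rightarrow> 'v \<Rightarrow> 'v) \<Rightarrow> ('v \<Rightarrow> 'v \<Rightarrow> 'v)
    \<Rightarrow> 'v \<Rightarrow> ('h \<times> 'h \<times> 'v) list \<Rightarrow> ('h \<times> 'h \<times> 'v) list" where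
  "lmulT cop S act mul a X =
     concat (map (\<lambda>(f, g, b). map (\<lambda>(f1, f2). (f1, g, mul (act (S f2) a) b)) (cop f)) X)"

text \<open>\<open>B c\<close> with \<open>((f \<otimes> g) \<otimes>_H b) c = (f \<otimes> g_(1)) \<otimes>_H b (g_(-2) c)\<close>.\<close>
definition rmulT :: "('h \<Rightarrow> ('h \<times> 'h) list) \<Rightarrow> ('h \<Rightarrow> 'h) \<Rightarrow> ('h \<Rightarrow> 'v \<Rightarrow> 'v) \<Rightarrow> ('v \<Rightarrow> 'v \<Rightarrow> 'v)
    \<Rightarrow> ('h \<times> 'h \<times> 'v) list \<Rightarrow> 'v \<Rightarrow> ('h \<times> 'h \<times> 'v) list" where
  "rmulT cop S act mul X c =
     concat (map (\<lambda>(f, g, b). map (\<lambda>(g1, g2). (f, g1, mul b (act (S g2) c))) (cop g)) X)"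

text \<open>Products of finitely many elements; \<open>None\<close> is the empty product, which is omitted.\<close>
fun vprodO :: "('v \<Rightarrow> 'v \<Rightarrow> 'v) \<Rightarrow> 'v list \<Rightarrow> 'v option" where
  "vprodO mul [] = None"
| "vprodO mul (x # xs) = Some (foldl mul x xs)"

definition vprod :: "('v \<Rightarrow> 'v \<Rightarrow> 'v) \<Rightarrow> 'v list \<Rightarrow> 'v" where
  "vprod mul xs = foldl mul (hd xs) (tl xs)"

definition lmulO :: "('h \<Rightarrow> ('h \<times> 'h) list) \<Rightarrow> ('h \<Rightarrow> 'h) \<Rightarrow> ('h \<Rightarrow> 'v \<Rightarrow> 'v) \<Rightarrow> ('v \<Rightarrow> 'v \<Rightarrow> 'v)
    \<Rightarrow> 'v option \<Rightarrow> ('h \<times> 'h \<times> 'v) list \<Rightarrow> ('h \<times> 'h \<times> 'v) list" where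
  "lmulO cop S act mul a X = (case a of None \<Rightarrow> X | Some a' \<Rightarrow> lmulT cop S act mul a' X)"

definition rmulO :: "('h \<Rightarrow> ('h \<times> 'h) list) \<Rightarrow> ('h \<Rightarrow> 'h) \<Rightarrow> ('h \<Rightarrow> 'v \<Rightarrow> 'v) \<Rightarrow> ('v \<Rightarrow> 'v \<Rightarrow> 'v)
    \<Rightarrow> ('h \<times> 'h \<times> 'v) list \<Rightarrow> 'v option \<Rightarrow> ('h \<times> 'h \<times> 'v) list" where
  "rmulO cop S act mul X c = (case c of None \<Rightarrow> X | Some c' \<Rightarrow> rmulT cop S act mul X c')"

text \<open>\<open>[a * X]\<close> for \<open>X = \<Sum> (f \<otimes> g) \<otimes>_H e\<close>:
  \<open>\<Sum> ((1 \<otimes> f \<otimes> g) \<otimes>_H 1) ((id \<otimes> \<Delta>) \<otimes>_H id) [a * e]\<close>.\<close>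
definition brL :: "('h::times \<Rightarrow> ('h \<times> 'h) list) \<Rightarrow> ('v \<Rightarrow> 'v \<Rightarrow> ('h \<times> 'h \<times> 'v) list)
    \<Rightarrow> 'v \<Rightarrow> ('h \<times> 'h \<times> 'v) list \<Rightarrow> ('h \<times> 'h \<times> 'h \<times> 'v) list" where
  "brL cop br a X = concat (map (\<lambda>(f, g, e).
     concat (map (\<lambda>(h, k, d). map (\<lambda>(k1, k2). (h, f * k1, g * k2, d)) (cop k)) (br a e))) X)"

text \<open>\<open>[X * c]\<close> for \<open>X = \<Sum> (f \<otimes> g) \<otimes>_H e\<close>:
  \<open>\<Sum> ((f \<otimes> g \<otimes> 1) \<otimes>_H 1) ((\<Delta> \<otimes> id) \<otimes>_H id) [e * c]\<close>.\<close>
definition brR :: "('h::times \<Rightarrow> ('h \<times> 'h) list) \<Rightarrow> ('v \<Rightarrow> 'v \<Rightarrow> ('h \<times> 'h \<times> 'v) list)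
    \<Rightarrow> ('h \<times> 'h \<times> 'v) list \<Rightarrow> 'v \<Rightarrow> ('h \<times> 'h \<times> 'h \<times> 'v) list" where
  "brR cop br X c = concat (map (\<lambda>(f, g, e).
     concat (map (\<lambda>(h, k, d). map (\<lambda>(h1, h2). (f * h1, g * h2, k, d)) (cop h)) (br e c))) X)"

text \<open>Super vector space \<open>V = V0 \<oplus> V1\<close>; \<open>Vp V0 V1 p\<close> is the homogeneous component of
parity \<open>p mod 2\<close>.\<close>
definition Vp :: "'v set \<Rightarrow> 'v set \<Rightarrow> nat \<Rightarrow> 'v set" where
  "Vp V0 V1 p = (if even p then V0 else V1)"

definition poisson_pseudoalg :: "('k::field_char_0 \<Rightarrow> 'h::ring_1 \<Rightarrow> 'h) \<Rightarrow> ('h \<Rightarrow> ('h \<times> 'h) list)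
    \<Rightarrow> ('h \<Rightarrow> 'k) \<Rightarrow> ('h \<Rightarrow> 'h) \<Rightarrow> ('k \<Rightarrow> 'v::ab_group_add \<Rightarrow> 'v) \<Rightarrow> ('h \<Rightarrow> 'v \<Rightarrow> 'v)
    \<Rightarrow> 'v set \<Rightarrow> 'v set \<Rightarrow> ('v \<Rightarrow> 'v \<Rightarrow> 'v) \<Rightarrow> ('v \<Rightarrow> 'v \<Rightarrow> ('h \<times> 'h \<times> 'v) list) \<Rightarrow> bool" where
  "poisson_pseudoalg sH cop eps S sV act V0 V1 mul br \<longleftrightarrow>
    \<comment> \<open>vector space\<close>
    (\<forall>c v w. sV c (v + w) = sV c v + sV c w) \<and>
    (\<forall>c d v. sV (c + d) v = sV c v + sV d v) \<and>
    (\<forall>c d v. sV (c * d) v = sV c (sV d v)) \<and>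
    (\<forall>v. sV 1 v = v) \<and>
    \<comment> \<open>super structure\<close>
    0 \<in> V0 \<and> (\<forall>v\<in>V0. \<forall>w\<in>V0. v + w \<in> V0) \<and> (\<forall>c. \<forall>v\<in>V0. sV c v \<in> V0) \<and>
    0 \<in> V1 \<and> (\<forall>v\<in>V1. \<forall>w\<in>V1. v + w \<in> V1) \<and> (\<forall>c. \<forall>v\<in>V1. sV c v \<in> V1) \<and>
    V0 \<inter> V1 = {0} \<and> (\<forall>v. \<exists>v0\<in>V0. \<exists>v1\<in>V1. v = v0 + v1) \<and>
    \<comment> \<open>left H-module (H purely even, so the action is even)\<close>
    (\<forall>x y v. act (x + y) v = act x v + act y v) \<and>
    (\<forall>c x v. act (sH c x) v = sV c (act x v)) \<and>
    (\<forall>h v w. act h (v + w) = act h v + act h w) \<and>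
    (\<forall>h c v. act h (sV c v) = sV c (act h v)) \<and>
    (\<forall>x y v. act (x * y) v = act x (act y v)) \<and>
    (\<forall>v. act 1 v = v) \<and>
    (\<forall>h. \<forall>v\<in>V0. act h v \<in> V0) \<and> (\<forall>h. \<forall>v\<in>V1. act h v \<in> V1) \<and>
    \<comment> \<open>even supercommutative associative product, compatible with the H-action\<close>
    (\<forall>a a' b. mul (a + a') b = mul a b + mul a' b) \<and>
    (\<forall>a b b'. mul a (b + b') = mul a b + mul a b') \<and>
    (\<forall>c a b. mul (sV c a) b = sV c (mul a b) \<and> mul a (sV c b) = sV c (mul a b)) \<and>
    (\<forall>a b c. mul (mul a b) c = mul a (mul b c)) \<and>
    (\<forall>i j a b. a \<in> Vp V0 V1 i \<longrightarrow> b \<in> Vp V0 V1 j \<longrightarrow>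
        mul a b \<in> Vp V0 V1 (i + j) \<and> mul a b = sV ((-1) ^ (i * j)) (mul b a)) \<and>
    (\<forall>h a b. act h (mul a b) = (\<Sum>(x, y)\<leftarrow>cop h. mul (act x a) (act y b))) \<and>
    \<comment> \<open>even pseudobracket: Lie pseudoalgebra\<close>
    (\<forall>a a' b. eq_T sH cop sV act (br (a + a') b) (br a b @ br a' b)) \<and>
    (\<forall>a b b'. eq_T sH cop sV act (br a (b + b')) (br a b @ br a b')) \<and>
    (\<forall>f g a b. eq_T sH cop sV act (br (act f a) (act g b)) (tmap2 f g (br a b))) \<and>
    (\<forall>i j a b. a \<in> Vp V0 V1 i \<longrightarrow> b \<in> Vp V0 V1 j \<longrightarrow>
        (\<exists>X. eq_T sH cop sV act (br a b) X \<and> (\<forall>(f, g, v)\<in>set X. v \<in> Vp V0 V1 (i + j)))) \<and>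
    (\<forall>i j a b. a \<in> Vp V0 V1 i \<longrightarrow> b \<in> Vp V0 V1 j \<longrightarrow>
        eq_T sH cop sV act (br b a) (tscal sV (- ((-1) ^ (i * j))) (tswap (br a b)))) \<and>
    (\<forall>i j a b c. a \<in> Vp V0 V1 i \<longrightarrow> b \<in> Vp V0 V1 j \<longrightarrow>
        eq_T4 sH cop sV act (brL cop br a (br b c))
          (tscal4 sV ((-1) ^ (i * j)) (tswap12 (brL cop br b (br a c))) @ brR cop br (br a b) c)) \<and>
    \<comment> \<open>Leibniz rule\<close>
    (\<forall>i j a b c. b \<in> Vp V0 V1 i \<longrightarrow> c \<in> Vp V0 V1 j \<longrightarrow>
        eq_T sH cop sV act (br a (mul b c))
          (rmulT cop S act mul (br a b) c @ tscal sV ((-1) ^ (i * j)) (rmulT cop S act mul (br a c) b)))"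

end

(* Writing B c and a B for the right and left products of a tensor B with elements of V, the
   Leibniz rule [a * b c] = [a * b] c + (-1)^(p(b)p(c)) [a * c] b together with associativity of
   B c gives, by induction on n, the expansion of [x * (b_1 ... b_n)].  Combined with
   skew-symmetry, the Leibniz rule yields a left Leibniz rule
   [(A a) * B] = (-1)^(p(A)p(a)) a [A * B] + A [a * B]: swapping the two tensor legs turns the right
   product by a homogeneous element into the left product, up to the sign of supercommutativity.  An induction on m then gives the double expansion; the signs collect to
   epsilon_ij.
   Most of the work is to show that B c, a B and the leg swap are well defined on
   (H (x) H) (x)_H V: each map is checked on the defining relations via its linear extension to the
   free vector space, using that the antipode is an antihomomorphism, coassociativity and
   cocommutativity.  Associativity of B c is checked on representatives with second leg 1. *)

theory Submission
  imports Defs "HOL.Vector_Spaces"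
begin

section \<open>Linear maps out of free vector spaces\<close>

lemma flist_Nil [simp]: "flist [] = 0"
  by (simp add: flist_def)

lemma flist_Cons: "flist (x # xs) = fsingle x 1 + flist xs"
  by (simp add: flist_def)

lemma flist_append [simp]: "flist (xs @ ys) = flist xs + flist ys"
  by (simp add: flist_def)

lemma flist_concat_map: "flist (concat (map F xs)) = (\<Sum>x\<leftarrow>xs. flist (F x))"
  by (induct xs) simp_all

lemma fsingle_scale: "(\<lambda>z. c * fsingle x 1 z) = fsingle x (c::'k::comm_ring_1)"
  by (auto simp: fun_eq_iff fsingle_def)

definition supp :: "('a \<Rightarrow> 'k::zero) \<Rightarrow> 'a set" where
  "supp \<phi> = {t. \<phi> t \<noteq> 0}"

lemma finite_supp_zero [simp]: "finite (supp 0)"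
  by (simp add: supp_def)

lemma finite_supp_fsingle [simp]: "finite (supp (fsingle x c))"
  by (rule finite_subset[of _ "{x}"]) (auto simp: supp_def fsingle_def)

lemma finite_supp_add [simp]:
  "finite (supp \<phi>) \<Longrightarrow> finite (supp \<psi>) \<Longrightarrow> finite (supp (\<phi> + \<psi> :: 'a \<Rightarrow> 'k::monoid_add))"
  by (rule finite_subset[of _ "supp \<phi> \<union> supp \<psi>"]) (auto simp: supp_def)

lemma finite_supp_diff [simp]:
  "finite (supp \<phi>) \<Longrightarrow> finite (supp \<psi>) \<Longrightarrow> finite (supp (\<phi> - \<psi> :: 'a \<Rightarrow> 'k::group_add))"
  by (rule finite_subset[of _ "supp \<phi> \<union> supp \<psi>"]) (auto simp: supp_def)

lemma finite_supp_scale [simp]: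
  "finite (supp \<psi>) \<Longrightarrow> finite (supp (\<lambda>z. c * \<psi> z :: 'k::mult_zero))"
  by (rule finite_subset[of _ "supp \<psi>"]) (auto simp: supp_def)

lemma finite_supp_flist [simp]: "finite (supp (flist xs :: 'a \<Rightarrow> 'k::comm_ring_1))"
proof (induct xs)
  case (Cons x xs)
  then show ?case unfolding flist_Cons by (rule finite_supp_add[OF finite_supp_fsingle])
qed (simp add: supp_def)

interpretation fun_space: vector_space "\<lambda>(c::'k::field) (\<phi>::'a \<Rightarrow> 'k) z. c * \<phi> z"
  by unfold_locales (auto simp: algebra_simps)

lemma subspace_lspan: "fun_space.subspace (lspan G)"
  unfolding fun_space.subspace_def by (auto intro: lspan.intros)

lemmas lspan_diff = fun_space.subspace_diff[OF subspace_lspan]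

lemma rel_slot_add: "fsingle (e (ad x y)) 1 - fsingle (e x) 1 - fsingle (e y) 1 \<in> rel_slot ad sm e"
  unfolding rel_slot_def by blast

lemma rel_slot_scale: "fsingle (e (sm c x)) 1 - fsingle (e x) c \<in> rel_slot ad sm e"
  unfolding rel_slot_def by blast

context vector_space
begin

lemma scale_sum_list_right: "a *s (\<Sum>x\<leftarrow>xs. f x) = (\<Sum>x\<leftarrow>xs. a *s f x)"
  by (induct xs) (simp_all add: scale_right_distrib)

text \<open>Finitely supported functions model the free vector space; for \<open>\<psi>\<close> of infinite support
  the sum is the junk value \<open>0\<close>.\<close>
definition lin_ext :: "('c \<Rightarrow> 'b) \<Rightarrow> ('c \<Rightarrow> 'a) \<Rightarrow> 'b" where
  "lin_ext \<Phi> \<psi> = (\<Sum>t\<in>supp \<psi>. \<psi> t *s \<Phi> t)"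

lemma lin_ext_on: "finite A \<Longrightarrow> supp \<psi> \<subseteq> A \<Longrightarrow> lin_ext \<Phi> \<psi> = (\<Sum>t\<in>A. \<psi> t *s \<Phi> t)"
  unfolding lin_ext_def by (rule sum.mono_neutral_left) (auto simp: supp_def)

lemma lin_ext_zero [simp]: "lin_ext \<Phi> 0 = 0"
  by (simp add: lin_ext_def supp_def)

lemma lin_ext_fsingle: "lin_ext \<Phi> (fsingle x c) = c *s \<Phi> x"
  by (subst lin_ext_on[of "{x}"]) (auto simp: supp_def fsingle_def)

lemma lin_ext_add:
  assumes "finite (supp \<phi>)" "finite (supp \<psi>)"
  shows "lin_ext \<Phi> (\<phi> + \<psi>) = lin_ext \<Phi> \<phi> + lin_ext \<Phi> \<psi>"
proof -
  let ?A = "supp \<phi> \<union> supp \<psi>"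
  have "lin_ext \<Phi> (\<phi> + \<psi>) = (\<Sum>t\<in>?A. (\<phi> + \<psi>) t *s \<Phi> t)"
    using assms by (intro lin_ext_on) (auto simp: supp_def)
  also have "\<dots> = (\<Sum>t\<in>?A. \<phi> t *s \<Phi> t) + (\<Sum>t\<in>?A. \<psi> t *s \<Phi> t)"
    by (simp add: scale_left_distrib sum.distrib)
  also have "(\<Sum>t\<in>?A. \<phi> t *s \<Phi> t) = lin_ext \<Phi> \<phi>"
    by (rule lin_ext_on[symmetric]) (auto simp: assms)
  also have "(\<Sum>t\<in>?A. \<psi> t *s \<Phi> t) = lin_ext \<Phi> \<psi>"
    by (rule lin_ext_on[symmetric]) (auto simp: assms)
  finally show ?thesis .
qed

lemma lin_ext_scale: "lin_ext \<Phi> (\<lambda>z. c * \<psi> z) = c *s lin_ext \<Phi> \<psi>"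
proof (cases "c = 0")
  case False
  then have "supp (\<lambda>z. c * \<psi> z) = supp \<psi>" by (auto simp: supp_def)
  then show ?thesis by (simp add: lin_ext_def scale_sum_right)
qed (simp add: lin_ext_def supp_def)

lemma lin_ext_diff:
  assumes "finite (supp \<phi>)" "finite (supp \<psi>)"
  shows "lin_ext \<Phi> (\<phi> - \<psi>) = lin_ext \<Phi> \<phi> - lin_ext \<Phi> \<psi>"
proof -
  have neg: "lin_ext \<Phi> (- \<psi>) = - lin_ext \<Phi> \<psi>"
    using lin_ext_scale[of \<Phi> "-1" \<psi>] by (simp add: fun_Compl_def)
  have "finite (supp (- \<psi>))" using assms by (simp add: supp_def)
  then have "lin_ext \<Phi> (\<phi> + - \<psi>) = lin_ext \<Phi> \<phi> + lin_ext \<Phi> (- \<psi>)"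
    by (rule lin_ext_add[OF assms(1)])
  then show ?thesis by (simp only: neg diff_conv_add_uminus)
qed

lemma lin_ext_flist: "lin_ext \<Phi> (flist xs) = (\<Sum>x\<leftarrow>xs. \<Phi> x)"
proof (induct xs)
  case (Cons x xs)
  have "lin_ext \<Phi> (flist (x # xs)) = lin_ext \<Phi> (fsingle x 1) + lin_ext \<Phi> (flist xs)"
    unfolding flist_Cons by (rule lin_ext_add) simp_all
  then show ?case by (simp add: lin_ext_fsingle Cons)
qed (simp only: flist_Nil lin_ext_zero list.map sum_list.Nil)

lemma lin_ext_lspan_mem:
  assumes Z: "subspace Z" and G: "\<forall>g\<in>G. finite (supp g) \<and> lin_ext \<Phi> g \<in> Z"
    and "\<phi> \<in> lspan G"
  shows "finite (supp \<phi>) \<and> lin_ext \<Phi> \<phi> \<in> Z"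
  using \<open>\<phi> \<in> lspan G\<close>
proof induct
  case lspan_zero
  have "finite (supp 0) \<and> lin_ext \<Phi> 0 \<in> Z" using subspace_0[OF Z] by simp
  then show ?case by (simp add: zero_fun_def)
next
  case (lspan_gen g)
  then show ?case using G by blast
next
  case (lspan_add x y)
  then have "finite (supp (x + y)) \<and> lin_ext \<Phi> (x + y) \<in> Z"
    by (simp add: lin_ext_add subspace_add[OF Z])
  then show ?case by (simp add: plus_fun_def)
next
  case (lspan_smult x c)
  then show ?case by (simp add: lin_ext_scale subspace_scale[OF Z])
qed

lemma sum_list_diff_mem_if_lspan:
  assumes "subspace Z" and "\<forall>g\<in>G. finite (supp g) \<and> lin_ext \<Phi> g \<in> Z"
    and "flist X - flist Y \<in> lspan G"
  shows "(\<Sum>x\<leftarrow>X. \<Phi> x) - (\<Sum>y\<leftarrow>Y. \<Phi> y) \<in> Z"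
  using lin_ext_lspan_mem[OF assms] by (simp add: lin_ext_diff lin_ext_flist)

lemma rel_slot_lin_ext_mem:
  assumes Z: "subspace Z"
    and add: "\<And>x y. \<Phi> (e (ad x y)) - \<Phi> (e x) - \<Phi> (e y) \<in> Z"
    and scale: "\<And>c x. \<Phi> (e (sm c x)) - c *s \<Phi> (e x) \<in> Z"
  shows "\<forall>g\<in>rel_slot ad sm e. finite (supp g) \<and> lin_ext \<Phi> g \<in> Z"
proof
  fix g assume "g \<in> rel_slot ad sm e"
  then consider x y where "g = fsingle (e (ad x y)) 1 - fsingle (e x) 1 - fsingle (e y) 1"
    | c x where "g = fsingle (e (sm c x)) 1 - fsingle (e x) c"
    unfolding rel_slot_def by blast
  then show "finite (supp g) \<and> lin_ext \<Phi> g \<in> Z"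
    by cases (use add scale in \<open>simp_all add: lin_ext_diff lin_ext_fsingle\<close>)
qed

lemma rel_HH_lin_ext_mem:
  assumes Z: "subspace Z"
    and "\<And>x x' y. \<Phi> (x + x', y) - \<Phi> (x, y) - \<Phi> (x', y) \<in> Z"
    and "\<And>c x y. \<Phi> (sH c x, y) - c *s \<Phi> (x, y) \<in> Z"
    and "\<And>x y y'. \<Phi> (x, y + y') - \<Phi> (x, y) - \<Phi> (x, y') \<in> Z"
    and "\<And>c x y. \<Phi> (x, sH c y) - c *s \<Phi> (x, y) \<in> Z"
  shows "\<forall>g\<in>rel_HH sH. finite (supp g) \<and> lin_ext \<Phi> g \<in> Z"
proof -
  have "\<forall>g\<in>rel_slot (+) sH (\<lambda>x. (x, y)). finite (supp g) \<and> lin_ext \<Phi> g \<in> Z"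
    and "\<forall>g\<in>rel_slot (+) sH (\<lambda>y. (x, y)). finite (supp g) \<and> lin_ext \<Phi> g \<in> Z" for x y
    by (rule rel_slot_lin_ext_mem[OF Z]; simp add: assms(2-))+
  then show ?thesis unfolding rel_HH_def by blast
qed

lemma rel_HHH_lin_ext_mem:
  assumes Z: "subspace Z"
    and "\<And>x x' y z. \<Phi> (x + x', y, z) - \<Phi> (x, y, z) - \<Phi> (x', y, z) \<in> Z"
    and "\<And>c x y z. \<Phi> (sH c x, y, z) - c *s \<Phi> (x, y, z) \<in> Z"
    and "\<And>x y y' z. \<Phi> (x, y + y', z) - \<Phi> (x, y, z) - \<Phi> (x, y', z) \<in> Z"
    and "\<And>c x y z. \<Phi> (x, sH c y, z) - c *s \<Phi> (x, y, z) \<in> Z"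
    and "\<And>x y z z'. \<Phi> (x, y, z + z') - \<Phi> (x, y, z) - \<Phi> (x, y, z') \<in> Z"
    and "\<And>c x y z. \<Phi> (x, y, sH c z) - c *s \<Phi> (x, y, z) \<in> Z"
  shows "\<forall>g\<in>rel_HHH sH. finite (supp g) \<and> lin_ext \<Phi> g \<in> Z"
proof -
  have "\<forall>g\<in>rel_slot (+) sH (\<lambda>x. (x, y, z)). finite (supp g) \<and> lin_ext \<Phi> g \<in> Z"
    and "\<forall>g\<in>rel_slot (+) sH (\<lambda>y. (x, y, z)). finite (supp g) \<and> lin_ext \<Phi> g \<in> Z"
    and "\<forall>g\<in>rel_slot (+) sH (\<lambda>z. (x, y, z)). finite (supp g) \<and> lin_ext \<Phi> g \<in> Z" for x y z
    by (rule rel_slot_lin_ext_mem[OF Z]; simp add: assms(2-))+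
  then show ?thesis unfolding rel_HHH_def by blast
qed

lemma rel_T_lin_ext_mem:
  assumes Z: "subspace Z"
    and "\<And>x x' y v. \<Phi> (x + x', y, v) - \<Phi> (x, y, v) - \<Phi> (x', y, v) \<in> Z"
    and "\<And>c x y v. \<Phi> (sH c x, y, v) - c *s \<Phi> (x, y, v) \<in> Z"
    and "\<And>x y y' v. \<Phi> (x, y + y', v) - \<Phi> (x, y, v) - \<Phi> (x, y', v) \<in> Z"
    and "\<And>c x y v. \<Phi> (x, sH c y, v) - c *s \<Phi> (x, y, v) \<in> Z"
    and "\<And>x y v w. \<Phi> (x, y, v + w) - \<Phi> (x, y, v) - \<Phi> (x, y, w) \<in> Z"
    and "\<And>c x y v. \<Phi> (x, y, sV c v) - c *s \<Phi> (x, y, v) \<in> Z"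
    and bal: "\<And>f g h v. (\<Sum>(x, y)\<leftarrow>cop h. \<Phi> (f * x, g * y, v)) - \<Phi> (f, g, act h v) \<in> Z"
  shows "\<forall>g\<in>rel_T sH cop sV act. finite (supp g) \<and> lin_ext \<Phi> g \<in> Z"
proof -
  have slots: "\<forall>g\<in>rel_slot (+) sH (\<lambda>x. (x, y, v)). finite (supp g) \<and> lin_ext \<Phi> g \<in> Z"
    "\<forall>g\<in>rel_slot (+) sH (\<lambda>y. (x, y, v)). finite (supp g) \<and> lin_ext \<Phi> g \<in> Z"
    "\<forall>g\<in>rel_slot (+) sV (\<lambda>v. (x, y, v)). finite (supp g) \<and> lin_ext \<Phi> g \<in> Z" for x y v
    by (rule rel_slot_lin_ext_mem[OF Z]; simp add: assms(2-7))+
  have balanced: "finite (supp g) \<and> lin_ext \<Phi> g \<in> Z"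
    if "g = flist (map (\<lambda>(x, y). (f * x, g' * y, v)) (cop h)) - fsingle (f, g', act h v) 1"
    for g f g' h v
  proof -
    have "lin_ext \<Phi> g = (\<Sum>x\<leftarrow>map (\<lambda>(x, y). (f * x, g' * y, v)) (cop h). \<Phi> x) - \<Phi> (f, g', act h v)"
      unfolding that by (simp add: lin_ext_diff lin_ext_flist lin_ext_fsingle)
    also have "\<dots> = (\<Sum>(x, y)\<leftarrow>cop h. \<Phi> (f * x, g' * y, v)) - \<Phi> (f, g', act h v)"
      by (simp add: split_def comp_def)
    finally show ?thesis using bal that by simp
  qed
  show ?thesis
    unfolding rel_T_def using slots balanced by blast
qed

lemma eq_HH_sum_list_diff_mem:
  assumes "eq_HH sH L L'" and Z: "subspace Z"
    and "\<And>x x' y. \<Phi> (x + x', y) - \<Phi> (x, y) - \<Phi> (x', y) \<in> Z"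
    and "\<And>c x y. \<Phi> (sH c x, y) - c *s \<Phi> (x, y) \<in> Z"
    and "\<And>x y y'. \<Phi> (x, y + y') - \<Phi> (x, y) - \<Phi> (x, y') \<in> Z"
    and "\<And>c x y. \<Phi> (x, sH c y) - c *s \<Phi> (x, y) \<in> Z"
  shows "(\<Sum>t\<leftarrow>L. \<Phi> t) - (\<Sum>t\<leftarrow>L'. \<Phi> t) \<in> Z"
  using assms(1) unfolding eq_HH_def
  by (rule sum_list_diff_mem_if_lspan[OF Z rel_HH_lin_ext_mem[OF Z assms(3-)]])

lemma eq_HHH_sum_list_diff_mem:
  assumes "eq_HHH sH L L'" and Z: "subspace Z"
    and "\<And>x x' y z. \<Phi> (x + x', y, z) - \<Phi> (x, y, z) - \<Phi> (x', y, z) \<in> Z"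
    and "\<And>c x y z. \<Phi> (sH c x, y, z) - c *s \<Phi> (x, y, z) \<in> Z"
    and "\<And>x y y' z. \<Phi> (x, y + y', z) - \<Phi> (x, y, z) - \<Phi> (x, y', z) \<in> Z"
    and "\<And>c x y z. \<Phi> (x, sH c y, z) - c *s \<Phi> (x, y, z) \<in> Z"
    and "\<And>x y z z'. \<Phi> (x, y, z + z') - \<Phi> (x, y, z) - \<Phi> (x, y, z') \<in> Z"
    and "\<And>c x y z. \<Phi> (x, y, sH c z) - c *s \<Phi> (x, y, z) \<in> Z"
  shows "(\<Sum>t\<leftarrow>L. \<Phi> t) - (\<Sum>t\<leftarrow>L'. \<Phi> t) \<in> Z"
  using assms(1) unfolding eq_HHH_def
  by (rule sum_list_diff_mem_if_lspan[OF Z rel_HHH_lin_ext_mem[OF Z assms(3-)]])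

lemma eq_HH_sum_list_eq:
  assumes "eq_HH sH L L'"
    and "\<And>x x' y. \<Phi> (x + x') y = \<Phi> x y + \<Phi> x' y"
    and "\<And>c x y. \<Phi> (sH c x) y = c *s \<Phi> x y"
    and "\<And>x y y'. \<Phi> x (y + y') = \<Phi> x y + \<Phi> x y'"
    and "\<And>c x y. \<Phi> x (sH c y) = c *s \<Phi> x y"
  shows "(\<Sum>(x, y)\<leftarrow>L. \<Phi> x y) = (\<Sum>(x, y)\<leftarrow>L'. \<Phi> x y)"
  using eq_HH_sum_list_diff_mem[OF assms(1) subspace_single_0, of "\<lambda>(x, y). \<Phi> x y"]
  by (simp add: assms(2-))

lemma eq_HHH_sum_list_eq:
  assumes "eq_HHH sH L L'"
    and "\<And>x x' y z. \<Phi> (x + x') y z = \<Phi> x y z + \<Phi> x' y z"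
    and "\<And>c x y z. \<Phi> (sH c x) y z = c *s \<Phi> x y z"
    and "\<And>x y y' z. \<Phi> x (y + y') z = \<Phi> x y z + \<Phi> x y' z"
    and "\<And>c x y z. \<Phi> x (sH c y) z = c *s \<Phi> x y z"
    and "\<And>x y z z'. \<Phi> x y (z + z') = \<Phi> x y z + \<Phi> x y z'"
    and "\<And>c x y z. \<Phi> x y (sH c z) = c *s \<Phi> x y z"
  shows "(\<Sum>(x, y, z)\<leftarrow>L. \<Phi> x y z) = (\<Sum>(x, y, z)\<leftarrow>L'. \<Phi> x y z)"
  using eq_HHH_sum_list_diff_mem[OF assms(1) subspace_single_0, of "\<lambda>(x, y, z). \<Phi> x y z"]
  by (simp add: assms(2-))

end

section \<open>Cocommutative Hopf algebras\<close>

lemma sum_list_concat_map: "(\<Sum>x\<leftarrow>concat (map F xs). f x) = (\<Sum>y\<leftarrow>xs. \<Sum>x\<leftarrow>F y. f x)"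
  by (induct xs) simp_all

lemma sum_list_swap: "(\<Sum>x\<leftarrow>xs. \<Sum>y\<leftarrow>ys. f x y) = (\<Sum>y\<leftarrow>ys. \<Sum>x\<leftarrow>xs. f x y :: 'a::comm_monoid_add)"
  by (induct xs) (simp_all add: sum_list_addf)

locale cocomm_hopf_algebra =
  fixes sH :: "'k::field_char_0 \<Rightarrow> 'h::ring_1 \<Rightarrow> 'h" and cop :: "'h \<Rightarrow> ('h \<times> 'h) list"
    and eps :: "'h \<Rightarrow> 'k" and S :: "'h \<Rightarrow> 'h"
  assumes hopf: "cocomm_hopf sH cop eps S"
begin

lemma
  shows sH_add: "sH c (x + y) = sH c x + sH c y"
    and sH_add_left: "sH (c + d) x = sH c x + sH d x"
    and sH_mult: "sH (c * d) x = sH c (sH d x)"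
    and sH_one: "sH 1 x = x"
    and sH_mult_left: "sH c (x * y) = sH c x * y"
    and cop_add: "eq_HH sH (cop (x + y)) (cop x @ cop y)"
    and cop_sH: "eq_HH sH (cop (sH c x)) (map (\<lambda>(u, v). (sH c u, v)) (cop x))"
    and coassoc: "eq_HHH sH (concat (map (\<lambda>(x, y). map (\<lambda>(x1, x2). (x1, x2, y)) (cop x)) (cop h)))
                   (concat (map (\<lambda>(x, y). map (\<lambda>(y1, y2). (x, y1, y2)) (cop y)) (cop h)))"
    and counit_left: "(\<Sum>(x, y)\<leftarrow>cop h. sH (eps x) y) = h"
    and counit_right: "(\<Sum>(x, y)\<leftarrow>cop h. sH (eps y) x) = h"
    and cop_mult: "eq_HH sH (cop (g * h))
        (concat (map (\<lambda>(x, y). map (\<lambda>(x', y'). (x * x', y * y')) (cop h)) (cop g)))"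
    and cop_one: "eq_HH sH (cop 1) [(1, 1)]"
    and eps_mult: "eps (g * h) = eps g * eps h"
    and eps_one: "eps 1 = 1"
    and S_add: "S (x + y) = S x + S y"
    and S_sH: "S (sH c x) = sH c (S x)"
    and antipode_left: "(\<Sum>(x, y)\<leftarrow>cop h. S x * y) = sH (eps h) 1"
    and antipode_right: "(\<Sum>(x, y)\<leftarrow>cop h. x * S y) = sH (eps h) 1"
    and cocomm: "eq_HH sH (cop h) (map prod.swap (cop h))"
  using hopf[unfolded cocomm_hopf_def] by auto

lemma sH_mult_right: "sH c (x * y) = x * sH c y"
  using hopf unfolding cocomm_hopf_def by (elim conjE) blast

sublocale H: vector_space sH
  by unfold_locales (simp_all add: sH_add sH_add_left sH_mult sH_one)

lemmas sH_mult_distrib = sH_mult_left[symmetric] sH_mult_right[symmetric]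

lemma S_zero [simp]: "S 0 = 0"
  using S_add[of 0 0] by simp

lemma S_sum_list: "S (\<Sum>x\<leftarrow>xs. f x) = (\<Sum>x\<leftarrow>xs. S (f x))"
  by (induct xs) (simp_all add: S_add)

lemma coassoc_sum:
  assumes "vector_space sc"
    and "\<And>x x' y z. \<Phi> (x + x') y z = \<Phi> x y z + \<Phi> x' y z"
    and "\<And>c x y z. \<Phi> (sH c x) y z = sc c (\<Phi> x y z)"
    and "\<And>x y y' z. \<Phi> x (y + y') z = \<Phi> x y z + \<Phi> x y' z"
    and "\<And>c x y z. \<Phi> x (sH c y) z = sc c (\<Phi> x y z)"
    and "\<And>x y z z'. \<Phi> x y (z + z') = \<Phi> x y z + \<Phi> x y z'"
    and "\<And>c x y z. \<Phi> x y (sH c z) = sc c (\<Phi> x y z)"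
  shows "(\<Sum>(x, y)\<leftarrow>cop h. \<Sum>(x1, x2)\<leftarrow>cop x. \<Phi> x1 x2 y)
       = (\<Sum>(x, y)\<leftarrow>cop h. \<Sum>(y1, y2)\<leftarrow>cop y. \<Phi> x y1 y2)"
  using vector_space.eq_HHH_sum_list_eq[OF assms(1) coassoc, of \<Phi>] assms(2-)
  by (simp add: sum_list_concat_map split_def comp_def)

lemma S_one: "S 1 = 1"
proof -
  have "(\<Sum>(x, y)\<leftarrow>cop 1. S x * y) = (\<Sum>(x, y)\<leftarrow>[(1, 1)]. S x * y)"
    by (rule H.eq_HH_sum_list_eq[OF cop_one])
       (simp_all add: S_add S_sH algebra_simps sH_mult_distrib)
  then show ?thesis using antipode_left[of 1] by (simp add: eps_one)
qed

lemma antipode_cop_mult: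
  "(\<Sum>(g1, g2)\<leftarrow>cop g. \<Sum>(h1, h2)\<leftarrow>cop h. S (g1 * h1) * (g2 * h2) * k) = sH (eps g * eps h) k"
proof -
  have "(\<Sum>(g1, g2)\<leftarrow>cop g. \<Sum>(h1, h2)\<leftarrow>cop h. S (g1 * h1) * (g2 * h2) * k)
      = (\<Sum>(u, v)\<leftarrow>concat (map (\<lambda>(x, y). map (\<lambda>(x', y'). (x * x', y * y')) (cop h)) (cop g)). S u * v * k)"
    by (simp add: sum_list_concat_map split_def comp_def)
  also have "\<dots> = (\<Sum>(u, v)\<leftarrow>cop (g * h). S u * v * k)"
    by (rule H.eq_HH_sum_list_eq[OF cop_mult, symmetric])
       (simp_all add: S_add S_sH algebra_simps sH_mult_distrib)
  also have "\<dots> = (\<Sum>(u, v)\<leftarrow>cop (g * h). S u * v) * k"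
    by (simp add: split_def sum_list_mult_const)
  also have "\<dots> = sH (eps g * eps h) k"
    by (simp add: antipode_left eps_mult sH_mult_left[symmetric])
  finally show ?thesis .
qed

lemma antipode_mult_sum_left:
  "(\<Sum>(x, g3)\<leftarrow>cop g. \<Sum>(g1, g2)\<leftarrow>cop x. \<Sum>(x', h3)\<leftarrow>cop h. \<Sum>(h1, h2)\<leftarrow>cop x'.
      S (g1 * h1) * (g2 * h2) * S h3 * S g3) = S h * S g"
proof -
  have "(\<Sum>(x, g3)\<leftarrow>cop g. \<Sum>(g1, g2)\<leftarrow>cop x. \<Sum>(x', h3)\<leftarrow>cop h. \<Sum>(h1, h2)\<leftarrow>cop x'.
      S (g1 * h1) * (g2 * h2) * S h3 * S g3)
    = (\<Sum>(x, g3)\<leftarrow>cop g. \<Sum>(x', h3)\<leftarrow>cop h. \<Sum>(g1, g2)\<leftarrow>cop x. \<Sum>(h1, h2)\<leftarrow>cop x'.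
      S (g1 * h1) * (g2 * h2) * (S h3 * S g3))"
    by (simp add: split_def sum_list_swap[of _ "cop h"] mult.assoc)
  also have "\<dots> = (\<Sum>(x, g3)\<leftarrow>cop g. \<Sum>(x', h3)\<leftarrow>cop h. sH (eps x * eps x') (S h3 * S g3))"
    by (simp add: antipode_cop_mult)
  also have "\<dots> = (\<Sum>(x, g3)\<leftarrow>cop g. \<Sum>(x', h3)\<leftarrow>cop h. sH (eps x') (S h3) * sH (eps x) (S g3))"
    by (simp add: sH_mult_distrib mult.commute)
  also have "\<dots> = (\<Sum>(x', h3)\<leftarrow>cop h. sH (eps x') (S h3)) * (\<Sum>(x, g3)\<leftarrow>cop g. sH (eps x) (S g3))"
    by (simp add: split_def sum_list_const_mult sum_list_mult_const)
  also have "\<dots> = S h * S g"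
    using arg_cong[OF counit_left[of h], of S] arg_cong[OF counit_left[of g], of S]
    by (simp add: S_sum_list S_sH split_def)
  finally show ?thesis .
qed

lemma antipode_mult_sum_right:
  "(\<Sum>(g1, y)\<leftarrow>cop g. \<Sum>(g2, g3)\<leftarrow>cop y. \<Sum>(h1, y')\<leftarrow>cop h. \<Sum>(h2, h3)\<leftarrow>cop y'.
      S (g1 * h1) * (g2 * h2) * S h3 * S g3) = S (g * h)"
proof -
  have inner: "(\<Sum>(h1, y')\<leftarrow>cop h. \<Sum>(h2, h3)\<leftarrow>cop y'. S (a * h1) * (b * h2) * S h3 * S c)
      = (\<Sum>(h1, y')\<leftarrow>cop h. sH (eps y') (S (a * h1) * b * S c))" for a b c
  proof -
    have "(\<Sum>(h1, y')\<leftarrow>cop h. \<Sum>(h2, h3)\<leftarrow>cop y'. S (a * h1) * (b * h2) * S h3 * S c)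
        = (\<Sum>(h1, y')\<leftarrow>cop h. S (a * h1) * b * (\<Sum>(h2, h3)\<leftarrow>cop y'. h2 * S h3) * S c)"
      by (simp add: split_def sum_list_const_mult[symmetric] sum_list_mult_const[symmetric] mult.assoc)
    then show ?thesis by (simp add: antipode_right sH_mult_distrib mult.assoc)
  qed
  have "(\<Sum>(g1, y)\<leftarrow>cop g. \<Sum>(g2, g3)\<leftarrow>cop y. \<Sum>(h1, y')\<leftarrow>cop h. \<Sum>(h2, h3)\<leftarrow>cop y'.
      S (g1 * h1) * (g2 * h2) * S h3 * S g3)
    = (\<Sum>(g1, y)\<leftarrow>cop g. \<Sum>(h1, y')\<leftarrow>cop h. sH (eps y') (S (g1 * h1) * (\<Sum>(g2, g3)\<leftarrow>cop y. g2 * S g3)))"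
    unfolding inner
    by (simp add: split_def sum_list_swap[of _ "cop h"] sum_list_const_mult sum_list_mult_const
        H.scale_sum_list_right[symmetric] mult.assoc)
  also have "\<dots> = (\<Sum>(g1, y)\<leftarrow>cop g. \<Sum>(h1, y')\<leftarrow>cop h. S (sH (eps y) g1 * sH (eps y') h1))"
    by (simp add: antipode_right S_sH sH_mult_distrib mult.commute)
  also have "\<dots> = S ((\<Sum>(g1, y)\<leftarrow>cop g. sH (eps y) g1) * (\<Sum>(h1, y')\<leftarrow>cop h. sH (eps y') h1))"
    by (simp add: split_def S_sum_list sum_list_const_mult[symmetric] sum_list_mult_const[symmetric])
       (rule sum_list_swap)
  finally show ?thesis by (simp add: counit_right)
qed

text \<open>The two sums above differ only by coassociativity, applied to \<open>\<Delta>(g)\<close> and to \<open>\<Delta>(h)\<close>.\<close>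
lemma S_antimult: "S (g * h) = S h * S g"
proof -
  define Q where "Q = (\<lambda>g1 g2 g3 h1 h2 h3. S (g1 * h1) * (g2 * h2) * S h3 * S g3)"
  define QL where "QL = (\<lambda>a b c. \<Sum>(x', h3)\<leftarrow>cop h. \<Sum>(h1, h2)\<leftarrow>cop x'. Q a b c h1 h2 h3)"
  define QR where "QR = (\<lambda>a b c. \<Sum>(h1, y')\<leftarrow>cop h. \<Sum>(h2, h3)\<leftarrow>cop y'. Q a b c h1 h2 h3)"
  have Q_lin: "Q (a + a') b c h1 h2 h3 = Q a b c h1 h2 h3 + Q a' b c h1 h2 h3"
    "Q (sH e a) b c h1 h2 h3 = sH e (Q a b c h1 h2 h3)"
    "Q a (b + b') c h1 h2 h3 = Q a b c h1 h2 h3 + Q a b' c h1 h2 h3"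
    "Q a (sH e b) c h1 h2 h3 = sH e (Q a b c h1 h2 h3)"
    "Q a b (c + c') h1 h2 h3 = Q a b c h1 h2 h3 + Q a b c' h1 h2 h3"
    "Q a b (sH e c) h1 h2 h3 = sH e (Q a b c h1 h2 h3)"
    "Q a b c (h1 + h1') h2 h3 = Q a b c h1 h2 h3 + Q a b c h1' h2 h3"
    "Q a b c (sH e h1) h2 h3 = sH e (Q a b c h1 h2 h3)"
    "Q a b c h1 (h2 + h2') h3 = Q a b c h1 h2 h3 + Q a b c h1 h2' h3"
    "Q a b c h1 (sH e h2) h3 = sH e (Q a b c h1 h2 h3)"
    "Q a b c h1 h2 (h3 + h3') = Q a b c h1 h2 h3 + Q a b c h1 h2 h3'"
    "Q a b c h1 h2 (sH e h3) = sH e (Q a b c h1 h2 h3)"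
    for a a' b b' c c' h1 h1' h2 h2' h3 h3' e
    unfolding Q_def by (simp_all add: S_add S_sH algebra_simps sH_mult_distrib)
  have QL_QR: "QL a b c = QR a b c" for a b c
    unfolding QL_def QR_def by (rule coassoc_sum[OF H.vector_space_axioms]) (simp_all add: Q_lin)
  have QL_lin: "QL (a + a') b c = QL a b c + QL a' b c" "QL (sH e a) b c = sH e (QL a b c)"
    "QL a (b + b') c = QL a b c + QL a b' c" "QL a (sH e b) c = sH e (QL a b c)"
    "QL a b (c + c') = QL a b c + QL a b c'" "QL a b (sH e c) = sH e (QL a b c)"
    for a a' b b' c c' e
    unfolding QL_def by (simp_all add: Q_lin split_def sum_list_addf H.scale_sum_list_right)
  have "S h * S g = (\<Sum>(x, g3)\<leftarrow>cop g. \<Sum>(g1, g2)\<leftarrow>cop x. QL g1 g2 g3)"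
    unfolding QL_def Q_def by (rule antipode_mult_sum_left[symmetric])
  also have "\<dots> = (\<Sum>(g1, y)\<leftarrow>cop g. \<Sum>(g2, g3)\<leftarrow>cop y. QL g1 g2 g3)"
    by (rule coassoc_sum[OF H.vector_space_axioms]) (simp_all add: QL_lin)
  also have "\<dots> = (\<Sum>(g1, y)\<leftarrow>cop g. \<Sum>(g2, g3)\<leftarrow>cop y. QR g1 g2 g3)"
    using QL_QR by simp
  also have "\<dots> = S (g * h)"
    unfolding QR_def Q_def by (rule antipode_mult_sum_right)
  finally show ?thesis by simp
qed

end

section \<open>The quotient \<open>(H \<otimes> H) \<otimes>\<^sub>H V\<close>\<close>

lemma map_eq_concat_map_singleton: "map F xs = concat (map (\<lambda>x. [F x]) xs)"
  by (induct xs) simp_all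

lemma concat_map_singleton_prod: "concat (map (\<lambda>(x, y). [F x y]) xs) = map (\<lambda>(x, y). F x y) xs"
  by (induct xs) auto

lemma concat_map_concat: "concat (map F (concat xss)) = concat (map (\<lambda>xs. concat (map F xs)) xss)"
  by (induct xss) simp_all

lemma tscal_append [simp]: "tscal sV c (X @ Y) = tscal sV c X @ tscal sV c Y"
  by (simp add: tscal_def)

lemma tscal_concat_map: "tscal sV c (concat (map F xs)) = concat (map (\<lambda>x. tscal sV c (F x)) xs)"
  by (simp add: tscal_def map_concat comp_def)

lemma tswap_append [simp]: "tswap (X @ Y) = tswap X @ tswap Y"
  by (simp add: tswap_def)

lemma tswap_tswap [simp]: "tswap (tswap X) = X"
  by (induct X) (auto simp: tswap_def)

lemma tswap_tscal: "tswap (tscal sV c X) = tscal sV c (tswap X)"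
  by (simp add: tswap_def tscal_def case_prod_beta)

locale hopf_module = cocomm_hopf_algebra sH cop eps S + V: vector_space sV
  for sH :: "'k::field_char_0 \<Rightarrow> 'h::ring_1 \<Rightarrow> 'h" and cop :: "'h \<Rightarrow> ('h \<times> 'h) list"
    and eps :: "'h \<Rightarrow> 'k" and S :: "'h \<Rightarrow> 'h" and sV :: "'k \<Rightarrow> 'v::ab_group_add \<Rightarrow> 'v" +
  fixes act :: "'h \<Rightarrow> 'v \<Rightarrow> 'v"
  assumes act_add_left: "act (x + y) v = act x v + act y v"
    and act_sH: "act (sH c x) v = sV c (act x v)"
    and act_add: "act h (v + w) = act h v + act h w"
    and act_sV: "act h (sV c v) = sV c (act h v)"
    and act_mult: "act (x * y) v = act x (act y v)"
    and act_one: "act 1 v = v"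
begin

lemma act_sum_list_left: "act (\<Sum>x\<leftarrow>xs. f x) v = (\<Sum>x\<leftarrow>xs. act (f x) v)"
  by (induct xs) (simp_all add: act_add_left act_sH[of 0, simplified])

lemma tscal_tscal [simp]: "tscal sV c (tscal sV d X) = tscal sV (c * d) X"
  by (simp add: tscal_def case_prod_beta)

lemma tscal_one [simp]: "tscal sV 1 X = X"
  by (simp add: tscal_def case_prod_beta)

abbreviation eq_T_rel (infix \<open>\<approx>\<close> 50) where
  "X \<approx> Y \<equiv> eq_T sH cop sV act X Y"

abbreviation rel_T_span where
  "rel_T_span \<equiv> lspan (rel_T sH cop sV act)"

lemma eq_T_iff: "X \<approx> Y \<longleftrightarrow> flist X - flist Y \<in> rel_T_span"
  by (simp add: eq_T_def)

lemma eq_T_refl [simp]: "X \<approx> X"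
  by (simp add: eq_T_iff lspan_zero)

lemma eq_T_if_flist_eq: "flist X = (flist Y :: _ \<Rightarrow> 'k) \<Longrightarrow> X \<approx> Y"
  by (simp add: eq_T_iff lspan_zero)

lemma eq_T_sym: "X \<approx> Y \<Longrightarrow> Y \<approx> X"
  unfolding eq_T_iff using fun_space.subspace_neg[OF subspace_lspan] by fastforce

lemma eq_T_trans [trans]: "X \<approx> Y \<Longrightarrow> Y \<approx> Z \<Longrightarrow> X \<approx> Z"
  unfolding eq_T_iff using lspan_add by fastforce

lemma eq_T_append: "X \<approx> X' \<Longrightarrow> Y \<approx> Y' \<Longrightarrow> X @ Y \<approx> X' @ Y'"
  unfolding eq_T_iff using lspan_add by (fastforce simp: algebra_simps)

lemma eq_T_concat_map:
  "(\<And>x. x \<in> set xs \<Longrightarrow> F x \<approx> G x) \<Longrightarrow> concat (map F xs) \<approx> concat (map G xs)"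
  by (induct xs) (simp_all add: eq_T_append)

lemma eq_T_map: "(\<And>x. x \<in> set xs \<Longrightarrow> [F x] \<approx> [G x]) \<Longrightarrow> map F xs \<approx> map G xs"
  by (subst (1 2) map_eq_concat_map_singleton) (rule eq_T_concat_map)

lemma rel_T_slot1: "r \<in> rel_slot (+) sH (\<lambda>x. (x, y, v)) \<Longrightarrow> r \<in> rel_T_span"
  by (rule lspan_gen) (auto simp: rel_T_def)

lemma rel_T_slot2: "r \<in> rel_slot (+) sH (\<lambda>y. (x, y, v)) \<Longrightarrow> r \<in> rel_T_span"
  by (rule lspan_gen) (auto simp: rel_T_def)

lemma rel_T_slot3: "r \<in> rel_slot (+) sV (\<lambda>v. (x, y, v)) \<Longrightarrow> r \<in> rel_T_span"
  by (rule lspan_gen) (auto simp: rel_T_def)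

lemma flist_tscal_diff_mem: "flist (tscal sV c X) - (\<lambda>z. c * flist X z) \<in> rel_T_span"
proof (induct X)
  case Nil
  have "flist (tscal sV c []) - (\<lambda>z. c * flist [] z) = (0 :: 'h \<times> 'h \<times> 'v \<Rightarrow> 'k)"
    by (simp add: tscal_def fun_eq_iff)
  then show ?case by (simp only: lspan_zero)
next
  case (Cons t X)
  obtain f g v where t: "t = (f, g, v)" by (cases t)
  have head: "fsingle (f, g, sV c v) 1 - fsingle (f, g, v) c \<in> rel_T_span"
    by (rule rel_T_slot3, rule rel_slot_scale)
  have "flist (tscal sV c (t # X)) - (\<lambda>z. c * flist (t # X) z)
      = (fsingle (f, g, sV c v) 1 - fsingle (f, g, v) c) + (flist (tscal sV c X) - (\<lambda>z. c * flist X z))"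
    by (simp add: t tscal_def flist_Cons fun_eq_iff fsingle_def algebra_simps)
  then show ?case by (simp only:) (rule lspan_add[OF head Cons])
qed

lemma eq_T_tscal_iff: "X \<approx> tscal sV c Y \<longleftrightarrow> flist X - (\<lambda>z. c * flist Y z) \<in> rel_T_span"
proof -
  have "flist X - (\<lambda>z. c * flist Y z)
      = (flist X - flist (tscal sV c Y)) + (flist (tscal sV c Y) - (\<lambda>z. c * flist Y z))"
    by simp
  then show ?thesis
    unfolding eq_T_iff using flist_tscal_diff_mem[of c Y] lspan_add lspan_diff by fastforce
qed

lemma eq_T_append_iff: "X \<approx> Y @ Z \<longleftrightarrow> flist X - flist Y - flist Z \<in> rel_T_span"
  unfolding eq_T_iff by (simp add: diff_diff_eq)

lemma eq_T_tscal: "X \<approx> Y \<Longrightarrow> tscal sV c X \<approx> tscal sV c Y"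
proof -
  assume "X \<approx> Y"
  then have "(\<lambda>z. c * (flist X - flist Y) z) \<in> rel_T_span"
    unfolding eq_T_iff by (rule lspan_smult)
  moreover have "flist (tscal sV c X) - flist (tscal sV c Y) =
     (flist (tscal sV c X) - (\<lambda>z. c * flist X z)) - (flist (tscal sV c Y) - (\<lambda>z. c * flist Y z))
     + (\<lambda>z. c * (flist X - flist Y) z)"
    by (simp add: fun_eq_iff algebra_simps)
  ultimately show ?thesis
    unfolding eq_T_iff by (metis lspan_add lspan_diff flist_tscal_diff_mem)
qed

lemma eq_T_concat_map_eq_HH:
  assumes "eq_HH sH L L'"
    and "\<And>x x' y. F (x + x', y) \<approx> F (x, y) @ F (x', y)"
    and "\<And>c x y. F (sH c x, y) \<approx> tscal sV c (F (x, y))"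
    and "\<And>x y y'. F (x, y + y') \<approx> F (x, y) @ F (x, y')"
    and "\<And>c x y. F (x, sH c y) \<approx> tscal sV c (F (x, y))"
  shows "concat (map F L) \<approx> concat (map F L')"
proof -
  have "(\<Sum>t\<leftarrow>L. flist (F t)) - (\<Sum>t\<leftarrow>L'. flist (F t)) \<in> rel_T_span"
    by (rule fun_space.eq_HH_sum_list_diff_mem[OF assms(1) subspace_lspan])
       (use assms(2-) in \<open>simp_all add: eq_T_append_iff eq_T_tscal_iff[symmetric]\<close>)
  then show ?thesis unfolding eq_T_iff flist_concat_map .
qed

lemma eq_T_concat_map_eq_HHH:
  assumes "eq_HHH sH L L'"
    and "\<And>x x' y z. F (x + x', y, z) \<approx> F (x, y, z) @ F (x', y, z)"
    and "\<And>c x y z. F (sH c x, y, z) \<approx> tscal sV c (F (x, y, z))"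
    and "\<And>x y y' z. F (x, y + y', z) \<approx> F (x, y, z) @ F (x, y', z)"
    and "\<And>c x y z. F (x, sH c y, z) \<approx> tscal sV c (F (x, y, z))"
    and "\<And>x y z z'. F (x, y, z + z') \<approx> F (x, y, z) @ F (x, y, z')"
    and "\<And>c x y z. F (x, y, sH c z) \<approx> tscal sV c (F (x, y, z))"
  shows "concat (map F L) \<approx> concat (map F L')"
proof -
  have "(\<Sum>t\<leftarrow>L. flist (F t)) - (\<Sum>t\<leftarrow>L'. flist (F t)) \<in> rel_T_span"
    by (rule fun_space.eq_HHH_sum_list_diff_mem[OF assms(1) subspace_lspan])
       (use assms(2-) in \<open>simp_all add: eq_T_append_iff eq_T_tscal_iff[symmetric]\<close>)
  then show ?thesis unfolding eq_T_iff flist_concat_map .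
qed

lemma eq_T_concat_map_eq_T:
  assumes "X \<approx> Y"
    and "\<And>x x' y v. F (x + x', y, v) \<approx> F (x, y, v) @ F (x', y, v)"
    and "\<And>c x y v. F (sH c x, y, v) \<approx> tscal sV c (F (x, y, v))"
    and "\<And>x y y' v. F (x, y + y', v) \<approx> F (x, y, v) @ F (x, y', v)"
    and "\<And>c x y v. F (x, sH c y, v) \<approx> tscal sV c (F (x, y, v))"
    and "\<And>x y v w. F (x, y, v + w) \<approx> F (x, y, v) @ F (x, y, w)"
    and "\<And>c x y v. F (x, y, sV c v) \<approx> tscal sV c (F (x, y, v))"
    and bal: "\<And>f g h v. concat (map (\<lambda>(x, y). F (f * x, g * y, v)) (cop h)) \<approx> F (f, g, act h v)"
  shows "concat (map F X) \<approx> concat (map F Y)"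
proof -
  have "(\<Sum>(x, y)\<leftarrow>cop h. flist (F (f * x, g * y, v))) - flist (F (f, g, act h v)) \<in> rel_T_span"
    for f g h v
    using bal[of f g v h] by (simp add: eq_T_iff flist_concat_map split_def comp_def)
  then have "\<forall>r\<in>rel_T sH cop sV act. finite (supp r) \<and> fun_space.lin_ext (\<lambda>t. flist (F t)) r \<in> rel_T_span"
    by (intro fun_space.rel_T_lin_ext_mem[OF subspace_lspan])
       (use assms(2-7) in \<open>simp_all add: eq_T_append_iff eq_T_tscal_iff[symmetric]\<close>)
  then show ?thesis
    using fun_space.sum_list_diff_mem_if_lspan[OF subspace_lspan] assms(1)
    by (simp add: eq_T_iff flist_concat_map)
qed

lemma eq_T_add1: "[(x + x', g, v)] \<approx> [(x, g, v), (x', g, v)]"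
  using eq_T_append_iff[of "[(x + x', g, v)]" "[(x, g, v)]" "[(x', g, v)]"]
  by (simp add: flist_Cons rel_T_slot1[OF rel_slot_add])

lemma eq_T_add2: "[(f, y + y', v)] \<approx> [(f, y, v), (f, y', v)]"
  using eq_T_append_iff[of "[(f, y + y', v)]" "[(f, y, v)]" "[(f, y', v)]"]
  by (simp add: flist_Cons rel_T_slot2[OF rel_slot_add])

lemma eq_T_add3: "[(f, g, v + w)] \<approx> [(f, g, v), (f, g, w)]"
  using eq_T_append_iff[of "[(f, g, v + w)]" "[(f, g, v)]" "[(f, g, w)]"]
  by (simp add: flist_Cons rel_T_slot3[OF rel_slot_add])

lemma eq_T_scale1: "[(sH c x, g, v)] \<approx> [(x, g, sV c v)]"
proof -
  have "[(sH c x, g, v)] \<approx> tscal sV c [(x, g, v)]"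
    unfolding eq_T_tscal_iff by (simp add: flist_Cons fsingle_scale rel_T_slot1[OF rel_slot_scale])
  then show ?thesis by (simp add: tscal_def)
qed

lemma eq_T_scale2: "[(f, sH c y, v)] \<approx> [(f, y, sV c v)]"
proof -
  have "[(f, sH c y, v)] \<approx> tscal sV c [(f, y, v)]"
    unfolding eq_T_tscal_iff by (simp add: flist_Cons fsingle_scale rel_T_slot2[OF rel_slot_scale])
  then show ?thesis by (simp add: tscal_def)
qed

lemma eq_T_concat_map_additive:
  assumes add: "\<And>x y. F (x + y) \<approx> F x @ F y"
  shows "concat (map (\<lambda>t. F (\<phi> t)) xs) \<approx> F (\<Sum>t\<leftarrow>xs. \<phi> t)"
proof (induct xs)
  case Nil
  have "flist (F 0) - flist (F 0) - flist (F 0) \<in> rel_T_span"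
    using add[of 0 0] by (simp add: eq_T_append_iff)
  then have "- flist (F 0) \<in> rel_T_span" by simp
  then show ?case
    using fun_space.subspace_neg[OF subspace_lspan] by (fastforce simp: eq_T_iff)
next
  case (Cons x xs)
  have "F (\<phi> x) @ concat (map (\<lambda>t. F (\<phi> t)) xs) \<approx> F (\<phi> x) @ F (\<Sum>t\<leftarrow>xs. \<phi> t)"
    by (rule eq_T_append[OF eq_T_refl Cons])
  also have "\<dots> \<approx> F (\<phi> x + (\<Sum>t\<leftarrow>xs. \<phi> t))"
    by (rule eq_T_sym[OF add])
  finally show ?case by simp
qed

lemma eq_T_sum1: "concat (map (\<lambda>t. [(\<phi> t, g, v)]) xs) \<approx> [(\<Sum>t\<leftarrow>xs. \<phi> t, g, v)]"
  by (rule eq_T_concat_map_additive[where F = "\<lambda>x. [(x, g, v)]"]) (simp add: eq_T_add1)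

lemma eq_T_sum2: "concat (map (\<lambda>t. [(f, \<phi> t, v)]) xs) \<approx> [(f, \<Sum>t\<leftarrow>xs. \<phi> t, v)]"
  by (rule eq_T_concat_map_additive[where F = "\<lambda>y. [(f, y, v)]"]) (simp add: eq_T_add2)

lemma eq_T_sum3: "concat (map (\<lambda>t. [(f, g, \<phi> t)]) xs) \<approx> [(f, g, \<Sum>t\<leftarrow>xs. \<phi> t)]"
  by (rule eq_T_concat_map_additive[where F = "\<lambda>v. [(f, g, v)]"]) (simp add: eq_T_add3)

lemma eq_T_balance: "map (\<lambda>(x, y). (f * x, g * y, v)) (cop h) \<approx> [(f, g, act h v)]"
proof -
  have "flist (map (\<lambda>(x, y). (f * x, g * y, v)) (cop h)) - fsingle (f, g, act h v) 1 \<in> rel_T_span"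
    unfolding rel_T_def by (intro lspan_gen UnI2 CollectI) blast
  then show ?thesis by (simp add: eq_T_iff flist_Cons)
qed

lemma eq_T_map_append:
  "(\<And>x. x \<in> set xs \<Longrightarrow> [F x] \<approx> [G x, K x]) \<Longrightarrow> map F xs \<approx> map G xs @ map K xs"
proof (induct xs)
  case (Cons x xs)
  then have "[F x] @ map F xs \<approx> [G x, K x] @ (map G xs @ map K xs)"
    by (intro eq_T_append) simp_all
  then show ?case by (simp add: eq_T_iff algebra_simps flist_Cons)
qed simp

lemma eq_T_map_eq_HH:
  assumes "eq_HH sH L L'"
    and "\<And>t t'. \<beta> (t + t') = \<beta> t + \<beta> t'" and "\<And>c t. \<beta> (sH c t) = sV c (\<beta> t)"
  shows "map (\<lambda>(u, t). (f, u, \<beta> t)) L \<approx> map (\<lambda>(u, t). (f, u, \<beta> t)) L'"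
  by (subst (1 2) map_eq_concat_map_singleton, rule eq_T_concat_map_eq_HH[OF assms(1)])
     (simp_all add: eq_T_add2 eq_T_scale2 eq_T_add3 assms(2,3) tscal_def)

lemma eq_T_map_eq_HHH:
  assumes "eq_HHH sH L L'"
    and "\<And>t t'. \<beta> (t + t') = \<beta> t + \<beta> t'" and "\<And>c t. \<beta> (sH c t) = sV c (\<beta> t)"
  shows "map (\<lambda>(a, b, d). (f * a, g * b, \<beta> d)) L \<approx> map (\<lambda>(a, b, d). (f * a, g * b, \<beta> d)) L'"
proof -
  have "concat (map (\<lambda>(a, b, d). [(f * a, g * b, \<beta> d)]) L) \<approx> concat (map (\<lambda>(a, b, d). [(f * a, g * b, \<beta> d)]) L')"
    by (rule eq_T_concat_map_eq_HHH[OF assms(1)])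
       (simp_all add: eq_T_add1 eq_T_add2 eq_T_add3 eq_T_scale1 eq_T_scale2 assms(2,3) tscal_def
         distrib_left sH_mult_distrib)
  then show ?thesis by (simp add: map_eq_concat_map_singleton[of "\<lambda>(a, b, d). (f * a, g * b, \<beta> d)"] split_def)
qed

lemma eq_T_tswap: "X \<approx> Y \<Longrightarrow> tswap X \<approx> tswap Y"
proof -
  assume "X \<approx> Y"
  have tswap_eq: "tswap Z = concat (map (\<lambda>(f, g, v). [(g, f, v)]) Z)" for Z
    by (induct Z) (auto simp: tswap_def)
  show ?thesis unfolding tswap_eq
  proof (rule eq_T_concat_map_eq_T[OF \<open>X \<approx> Y\<close>])
    fix f g h :: 'h and v :: 'v
    have "concat (map (\<lambda>(x, y). [(g * y, f * x, v)]) (cop h))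
        \<approx> concat (map (\<lambda>(x, y). [(g * y, f * x, v)]) (map prod.swap (cop h)))"
      by (rule eq_T_concat_map_eq_HH[OF cocomm])
         (simp_all add: distrib_left sH_mult_distrib eq_T_add1 eq_T_add2 eq_T_scale1 eq_T_scale2 tscal_def)
    also have "\<dots> \<approx> [(g, f, act h v)]"
      using eq_T_balance[of g f v h] by (simp add: concat_map_singleton_prod comp_def split_def)
    finally show "concat (map (\<lambda>(x, y). case (f * x, g * y, v) of (f, g, v) \<Rightarrow> [(g, f, v)]) (cop h)) \<approx>
        (case (f, g, act h v) of (f, g, v) \<Rightarrow> [(g, f, v)])"
      by simp
  qed (simp_all add: eq_T_add1 eq_T_add2 eq_T_add3 eq_T_scale1 eq_T_scale2 tscal_def)
qed

lemma eq_T_antipode_contract: "map (\<lambda>(a, b). (f * S a * b, d, e)) (cop x) \<approx> [(f, sH (eps x) d, e)]"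
proof -
  have "map (\<lambda>(a, b). (f * S a * b, d, e)) (cop x) \<approx> [(\<Sum>(a, b)\<leftarrow>cop x. f * S a * b, d, e)]"
    using eq_T_sum1[of "\<lambda>(a, b). f * S a * b" d e "cop x"]
    by (simp add: map_eq_concat_map_singleton[of "\<lambda>(a, b). (f * S a * b, d, e)"] split_def)
  also have "(\<Sum>(a, b)\<leftarrow>cop x. f * S a * b) = f * (\<Sum>(a, b)\<leftarrow>cop x. S a * b)"
    by (simp add: split_def sum_list_const_mult mult.assoc)
  also have "\<dots> = sH (eps x) f"
    by (simp add: antipode_left sH_mult_distrib)
  also have "[(sH (eps x) f, d, e)] \<approx> [(f, d, sV (eps x) e)]" by (rule eq_T_scale1)
  also have "\<dots> \<approx> [(f, sH (eps x) d, e)]" by (rule eq_T_sym[OF eq_T_scale2])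
  finally show ?thesis .
qed

text \<open>Every tensor has a representative with second leg \<open>1\<close>:
  \<open>(f \<otimes> g) \<otimes>\<^sub>H e = \<Sum> (f S(g\<^sub>1) \<otimes> 1) \<otimes>\<^sub>H g\<^sub>2 e\<close>; the map \<open>\<phi>\<close> lets a product act on the
  \<open>V\<close>-component of the representative.\<close>
definition normal_form :: "('v \<Rightarrow> 'v) \<Rightarrow> ('h \<times> 'h \<times> 'v) list \<Rightarrow> ('h \<times> 'h \<times> 'v) list" where
  "normal_form \<phi> X = concat (map (\<lambda>(f, g, e). map (\<lambda>(g1, g2). (f * S g1, 1, \<phi> (act g2 e))) (cop g)) X)"

lemma eq_T_normal_form_single: "map (\<lambda>(g1, g2). (f * S g1, 1, act g2 e)) (cop g) \<approx> [(f, g, e)]"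
proof -
  have "map (\<lambda>(g1, g2). (f * S g1, 1, act g2 e)) (cop g)
      \<approx> concat (map (\<lambda>(g1, g2). map (\<lambda>(k1, k2). (f * S g1 * k1, k2, e)) (cop g2)) (cop g))"
    by (subst map_eq_concat_map_singleton, rule eq_T_concat_map)
       (auto intro: eq_T_sym[OF eq_T_balance[of _ 1, simplified]])
  also have "\<dots> = map (\<lambda>(a, b, d). (f * S a * b, d, e))
      (concat (map (\<lambda>(x, y). map (\<lambda>(y1, y2). (x, y1, y2)) (cop y)) (cop g)))"
    by (simp add: map_concat split_def comp_def)
  also have "\<dots> \<approx> map (\<lambda>(a, b, d). (f * S a * b, d, e))
      (concat (map (\<lambda>(x, y). map (\<lambda>(x1, x2). (x1, x2, y)) (cop x)) (cop g)))"
    by (subst (1 2) map_eq_concat_map_singleton, rule eq_T_sym, rule eq_T_concat_map_eq_HHH[OF coassoc])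
       (simp_all add: S_add S_sH distrib_left distrib_right sH_mult_distrib
         eq_T_add1 eq_T_add2 eq_T_scale1 eq_T_scale2 tscal_def)
  also have "\<dots> = concat (map (\<lambda>(x, d). map (\<lambda>(a, b). (f * S a * b, d, e)) (cop x)) (cop g))"
    by (simp add: map_concat split_def comp_def)
  also have "\<dots> \<approx> concat (map (\<lambda>(x, d). [(f, sH (eps x) d, e)]) (cop g))"
    by (rule eq_T_concat_map) (auto intro: eq_T_antipode_contract)
  also have "\<dots> \<approx> [(f, \<Sum>(x, d)\<leftarrow>cop g. sH (eps x) d, e)]"
    using eq_T_sum2[of f "\<lambda>(x, d). sH (eps x) d" e "cop g"] by (simp add: split_def)
  finally show ?thesis by (simp add: counit_left)
qed

lemma normal_form_eq_T: "normal_form (\<lambda>v. v) X \<approx> X"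
proof -
  have "normal_form (\<lambda>v. v) X \<approx> concat (map (\<lambda>t. [t]) X)"
    unfolding normal_form_def by (rule eq_T_concat_map) (auto intro: eq_T_normal_form_single)
  then show ?thesis by simp
qed

end

section \<open>Products of tensors with elements of \<open>V\<close>\<close>

locale hopf_module_product = hopf_module sH cop eps S sV act
  for sH :: "'k::field_char_0 \<Rightarrow> 'h::ring_1 \<Rightarrow> 'h" and cop :: "'h \<Rightarrow> ('h \<times> 'h) list"
    and eps :: "'h \<Rightarrow> 'k" and S :: "'h \<Rightarrow> 'h" and sV :: "'k \<Rightarrow> 'v::ab_group_add \<Rightarrow> 'v"
    and act :: "'h \<Rightarrow> 'v \<Rightarrow> 'v" +
  fixes mu :: "'v \<Rightarrow> 'v \<Rightarrow> 'v"
  assumes mu_add_left: "mu (a + a') b = mu a b + mu a' b"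
    and mu_add_right: "mu a (b + b') = mu a b + mu a b'"
    and mu_sV_left: "mu (sV c a) b = sV c (mu a b)"
    and mu_sV_right: "mu a (sV c b) = sV c (mu a b)"
    and act_mu: "act h (mu a b) = (\<Sum>(x, y)\<leftarrow>cop h. mu (act x a) (act y b))"
begin

lemma mu_sum_list_left: "mu (\<Sum>x\<leftarrow>xs. f x) b = (\<Sum>x\<leftarrow>xs. mu (f x) b)"
  by (induct xs) (simp_all add: mu_add_left mu_sV_left[of 0, simplified])

lemma mu_sum_list_right: "mu a (\<Sum>x\<leftarrow>xs. f x) = (\<Sum>x\<leftarrow>xs. mu a (f x))"
  by (induct xs) (simp_all add: mu_add_right mu_sV_right[of _ 0, simplified])

lemmas mu_act_S_linear = S_add S_sH act_add_left act_sH mu_add_right mu_sV_right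

lemma act_mu_antipode: "(\<Sum>(z, y)\<leftarrow>cop h. act z (mu v (act (S y) c))) = mu (act h v) c"
proof -
  have "(\<Sum>(z, y)\<leftarrow>cop h. act z (mu v (act (S y) c)))
      = (\<Sum>(z, y)\<leftarrow>cop h. \<Sum>(z1, z2)\<leftarrow>cop z. mu (act z1 v) (act (z2 * S y) c))"
    by (simp add: act_mu act_mult)
  also have "\<dots> = (\<Sum>(z1, w)\<leftarrow>cop h. \<Sum>(w1, w2)\<leftarrow>cop w. mu (act z1 v) (act (w1 * S w2) c))"
    by (rule coassoc_sum[OF V.vector_space_axioms])
       (simp_all add: act_add_left act_sH mu_add_left mu_add_right mu_sV_left mu_sV_right
         distrib_left distrib_right S_add S_sH sH_mult_distrib)
  also have "\<dots> = (\<Sum>(z1, w)\<leftarrow>cop h. mu (act z1 v) (act (\<Sum>(w1, w2)\<leftarrow>cop w. w1 * S w2) c))"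
    by (simp add: split_def act_sum_list_left mu_sum_list_right)
  also have "\<dots> = (\<Sum>(z1, w)\<leftarrow>cop h. mu (act (sH (eps w) z1) v) c)"
    by (simp add: antipode_right act_sH act_one mu_sV_left mu_sV_right)
  also have "\<dots> = mu (act (\<Sum>(z1, w)\<leftarrow>cop h. sH (eps w) z1) v) c"
    by (simp add: split_def act_sum_list_left mu_sum_list_left)
  finally show ?thesis by (simp add: counit_right)
qed

lemma rmulT_balance_inner:
  "concat (map (\<lambda>(x, y). map (\<lambda>(y1, y2). (f * x, g * y1, mu v (act (S y2) c))) (cop y)) (cop h))
   \<approx> [(f, g, mu (act h v) c)]"
proof -
  let ?\<beta> = "\<lambda>d. mu v (act (S d) c)"
  have "concat (map (\<lambda>(x, y). map (\<lambda>(y1, y2). (f * x, g * y1, ?\<beta> y2)) (cop y)) (cop h))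
     = map (\<lambda>(a, b, d). (f * a, g * b, ?\<beta> d))
         (concat (map (\<lambda>(x, y). map (\<lambda>(y1, y2). (x, y1, y2)) (cop y)) (cop h)))"
    by (simp add: map_concat split_def comp_def)
  also have "\<dots> \<approx> map (\<lambda>(a, b, d). (f * a, g * b, ?\<beta> d))
         (concat (map (\<lambda>(x, y). map (\<lambda>(x1, x2). (x1, x2, y)) (cop x)) (cop h)))"
    by (rule eq_T_sym, rule eq_T_map_eq_HHH[OF coassoc]) (simp_all add: mu_act_S_linear)
  also have "\<dots> = concat (map (\<lambda>(z, y2). map (\<lambda>(x, y1). (f * x, g * y1, ?\<beta> y2)) (cop z)) (cop h))"
    by (simp add: map_concat split_def comp_def)
  also have "\<dots> \<approx> concat (map (\<lambda>(z, y2). [(f, g, act z (?\<beta> y2))]) (cop h))"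
    by (rule eq_T_concat_map) (auto intro: eq_T_balance)
  also have "\<dots> \<approx> [(f, g, \<Sum>(z, y2)\<leftarrow>cop h. act z (?\<beta> y2))]"
    using eq_T_sum3[of f g "\<lambda>(z, y2). act z (?\<beta> y2)" "cop h"] by (simp add: split_def)
  finally show ?thesis by (simp add: act_mu_antipode)
qed

lemma rmulT_cop_mult:
  "map (\<lambda>(u, t). (f, u, mu v (act (S t) c))) (cop (g * y)) \<approx>
   concat (map (\<lambda>(g1, g2). map (\<lambda>(y1, y2). (f, g1 * y1, mu v (act (S y2) (act (S g2) c)))) (cop y)) (cop g))"
proof -
  have "map (\<lambda>(u, t). (f, u, mu v (act (S t) c))) (cop (g * y))
      \<approx> map (\<lambda>(u, t). (f, u, mu v (act (S t) c)))
           (concat (map (\<lambda>(a, b). map (\<lambda>(a', b'). (a * a', b * b')) (cop y)) (cop g)))"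
    by (rule eq_T_map_eq_HH[OF cop_mult]) (simp_all add: mu_act_S_linear)
  also have "\<dots> = concat (map (\<lambda>(g1, g2). map (\<lambda>(y1, y2). (f, g1 * y1, mu v (act (S (g2 * y2)) c))) (cop y))
      (cop g))"
    by (simp add: map_concat split_def comp_def)
  finally show ?thesis by (simp add: S_antimult act_mult)
qed

lemma rmulT_balance:
  "concat (map (\<lambda>(x, y). map (\<lambda>(g1, g2). (f * x, g1, mu v (act (S g2) c))) (cop (g * y))) (cop h))
   \<approx> map (\<lambda>(g1, g2). (f, g1, mu (act h v) (act (S g2) c))) (cop g)"
proof -
  let ?t = "\<lambda>x g1 g2 y1 y2. (f * x, g1 * y1, mu v (act (S y2) (act (S g2) c)))"
  have "concat (map (\<lambda>(x, y). map (\<lambda>(g1, g2). (f * x, g1, mu v (act (S g2) c))) (cop (g * y))) (cop h))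
     \<approx> concat (map (\<lambda>(x, y). concat (map (\<lambda>(g1, g2). map (\<lambda>(y1, y2). ?t x g1 g2 y1 y2) (cop y)) (cop g)))
         (cop h))"
    by (rule eq_T_concat_map) (auto intro: rmulT_cop_mult)
  also have "\<dots> \<approx> concat (map (\<lambda>(g1, g2). concat (map (\<lambda>(x, y). map (\<lambda>(y1, y2). ?t x g1 g2 y1 y2) (cop y))
         (cop h))) (cop g))"
    by (rule eq_T_if_flist_eq) (simp add: flist_concat_map split_def, rule sum_list_swap)
  also have "\<dots> \<approx> concat (map (\<lambda>(g1, g2). [(f, g1, mu (act h v) (act (S g2) c))]) (cop g))"
    by (rule eq_T_concat_map) (auto intro: rmulT_balance_inner)
  finally show ?thesis by (simp add: concat_map_singleton_prod)
qed

definition rmul_single :: "'v \<Rightarrow> 'h \<times> 'h \<times> 'v \<Rightarrow> ('h \<times> 'h \<times> 'v) list" where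
  "rmul_single c = (\<lambda>(f, g, b). map (\<lambda>(g1, g2). (f, g1, mu b (act (S g2) c))) (cop g))"

lemma rmulT_eq_concat_map: "rmulT cop S act mu X c = concat (map (rmul_single c) X)"
  by (simp add: rmulT_def rmul_single_def)

lemma rmulT_cong:
  assumes "X \<approx> Y"
  shows "rmulT cop S act mu X c \<approx> rmulT cop S act mu Y c"
  unfolding rmulT_eq_concat_map
proof (rule eq_T_concat_map_eq_T[OF assms])
  fix x x' y :: 'h and v w :: 'v and e :: 'k
  show "rmul_single c (x + x', y, v) \<approx> rmul_single c (x, y, v) @ rmul_single c (x', y, v)"
    unfolding rmul_single_def by (auto intro: eq_T_map_append eq_T_add1)
  show "rmul_single c (sH e x, y, v) \<approx> tscal sV e (rmul_single c (x, y, v))"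
    unfolding rmul_single_def tscal_def by (simp add: comp_def split_def) (rule eq_T_map, simp add: eq_T_scale1)
  show "rmul_single c (x, y + y', v) \<approx> rmul_single c (x, y, v) @ rmul_single c (x, y', v)" for y'
    using eq_T_map_eq_HH[OF cop_add, of "\<lambda>t. mu v (act (S t) c)" x]
    by (simp add: rmul_single_def mu_act_S_linear)
  show "rmul_single c (x, sH e y, v) \<approx> tscal sV e (rmul_single c (x, y, v))"
  proof -
    have "rmul_single c (x, sH e y, v) \<approx> map (\<lambda>(g1, g2). (x, sH e g1, mu v (act (S g2) c))) (cop y)"
      using eq_T_map_eq_HH[OF cop_sH, of "\<lambda>t. mu v (act (S t) c)" x]
      by (simp add: rmul_single_def mu_act_S_linear split_def comp_def)
    also have "\<dots> \<approx> tscal sV e (rmul_single c (x, y, v))"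
      unfolding rmul_single_def tscal_def by (simp add: comp_def split_def) (rule eq_T_map, simp add: eq_T_scale2)
    finally show ?thesis .
  qed
  show "rmul_single c (x, y, v + w) \<approx> rmul_single c (x, y, v) @ rmul_single c (x, y, w)"
    unfolding rmul_single_def by (auto simp: mu_add_left intro: eq_T_map_append eq_T_add3)
  show "rmul_single c (x, y, sV e v) \<approx> tscal sV e (rmul_single c (x, y, v))"
    by (simp add: rmul_single_def tscal_def mu_sV_left split_def comp_def)
  show "concat (map (\<lambda>(a, b). rmul_single c (f * a, g * b, u)) (cop h)) \<approx> rmul_single c (f, g, act h u)"
    for f g h u
    using rmulT_balance[of f u c g h] by (simp add: rmul_single_def)
qed

lemma rmulT_normal_form: "rmulT cop S act mu (normal_form \<phi> X) c \<approx> normal_form (\<lambda>v. mu (\<phi> v) c) X"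
proof -
  have cop_one: "map (\<lambda>(g1, g2). (f, g1, mu e (act (S g2) c))) (cop 1) \<approx> [(f, 1, mu e c)]" for f e
    using eq_T_map_eq_HH[OF cop_one, of "\<lambda>t. mu e (act (S t) c)" f]
    by (simp add: mu_act_S_linear S_one act_one)
  have "rmulT cop S act mu (normal_form \<phi> X) c = concat (map (\<lambda>(f, g, e). concat (map (\<lambda>(g1, g2).
      map (\<lambda>(k1, k2). (f * S g1, k1, mu (\<phi> (act g2 e)) (act (S k2) c))) (cop 1)) (cop g))) X)"
    unfolding rmulT_def normal_form_def by (simp add: concat_map_concat split_def comp_def)
  also have "\<dots> \<approx> concat (map (\<lambda>(f, g, e). concat (map (\<lambda>(g1, g2). [(f * S g1, 1, mu (\<phi> (act g2 e)) c)])
      (cop g))) X)"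
    by (rule eq_T_concat_map, clarsimp, rule eq_T_concat_map, clarsimp, rule cop_one)
  also have "\<dots> = normal_form (\<lambda>v. mu (\<phi> v) c) X"
    unfolding normal_form_def by (simp only: concat_map_singleton_prod)
  finally show ?thesis .
qed

text \<open>Associativity is transported through the normal form, where the right product only
  touches the \<open>V\<close>-component.\<close>
lemma rmulT_assoc:
  assumes "\<And>a b c. mu (mu a b) c = mu a (mu b c)"
  shows "rmulT cop S act mu (rmulT cop S act mu X c) d \<approx> rmulT cop S act mu X (mu c d)"
proof -
  have "rmulT cop S act mu (rmulT cop S act mu X c) d
      \<approx> rmulT cop S act mu (rmulT cop S act mu (normal_form (\<lambda>v. v) X) c) d"
    by (intro rmulT_cong eq_T_sym[OF normal_form_eq_T])
  also have "\<dots> \<approx> rmulT cop S act mu (normal_form (\<lambda>v. mu v c) X) d"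
    by (intro rmulT_cong rmulT_normal_form)
  also have "\<dots> \<approx> normal_form (\<lambda>v. mu (mu v c) d) X"
    by (rule rmulT_normal_form)
  also have "\<dots> = normal_form (\<lambda>v. mu v (mu c d)) X"
    by (simp add: assms)
  also have "\<dots> \<approx> rmulT cop S act mu (normal_form (\<lambda>v. v) X) (mu c d)"
    by (rule eq_T_sym[OF rmulT_normal_form])
  also have "\<dots> \<approx> rmulT cop S act mu X (mu c d)"
    by (intro rmulT_cong normal_form_eq_T)
  finally show ?thesis .
qed

text \<open>By cocommutativity the opposite product is again compatible with the action.\<close>
lemma hopf_module_product_opposite: "hopf_module_product sH cop eps S sV act (\<lambda>a b. mu b a)"
proof (intro hopf_module_product.intro hopf_module_axioms hopf_module_product_axioms.intro)
  fix h a b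
  have "act h (mu b a) = (\<Sum>(x, y)\<leftarrow>map prod.swap (cop h). mu (act x b) (act y a))"
    unfolding act_mu
    by (rule V.eq_HH_sum_list_eq[OF cocomm])
       (simp_all add: act_add_left act_sH mu_add_left mu_add_right mu_sV_left mu_sV_right)
  then show "act h (mu b a) = (\<Sum>(x, y)\<leftarrow>cop h. mu (act y b) (act x a))"
    by (simp add: comp_def split_def)
qed (simp_all add: mu_add_left mu_add_right mu_sV_left mu_sV_right)

lemma lmulT_eq_tswap_rmulT: "lmulT cop S act mu a X = tswap (rmulT cop S act (\<lambda>x y. mu y x) (tswap X) a)"
  by (simp add: lmulT_def rmulT_def tswap_def map_concat comp_def split_def)

lemma lmulT_cong: "X \<approx> Y \<Longrightarrow> lmulT cop S act mu a X \<approx> lmulT cop S act mu a Y"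
proof -
  interpret opposite: hopf_module_product sH cop eps S sV act "\<lambda>a b. mu b a"
    by (rule hopf_module_product_opposite)
  assume "X \<approx> Y"
  then show ?thesis
    unfolding lmulT_eq_tswap_rmulT by (intro eq_T_tswap opposite.rmulT_cong)
qed

lemma lmulT_assoc:
  assumes "\<And>a b c. mu (mu a b) c = mu a (mu b c)"
  shows "lmulT cop S act mu a (lmulT cop S act mu b X) \<approx> lmulT cop S act mu (mu a b) X"
proof -
  interpret opposite: hopf_module_product sH cop eps S sV act "\<lambda>a b. mu b a"
    by (rule hopf_module_product_opposite)
  have "rmulT cop S act (\<lambda>x y. mu y x) (rmulT cop S act (\<lambda>x y. mu y x) (tswap X) b) a
      \<approx> rmulT cop S act (\<lambda>x y. mu y x) (tswap X) (mu a b)"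
    using opposite.rmulT_assoc[of "tswap X" b a] by (simp add: assms)
  then show ?thesis
    unfolding lmulT_eq_tswap_rmulT by (simp add: eq_T_tswap)
qed

lemma rmulT_append [simp]: "rmulT cop S act mu (X @ Y) c = rmulT cop S act mu X c @ rmulT cop S act mu Y c"
  by (simp add: rmulT_def)

lemma lmulT_append [simp]: "lmulT cop S act mu a (X @ Y) = lmulT cop S act mu a X @ lmulT cop S act mu a Y"
  by (simp add: lmulT_def)

lemma rmulT_concat_map:
  "rmulT cop S act mu (concat (map F xs)) c = concat (map (\<lambda>x. rmulT cop S act mu (F x) c) xs)"
  by (simp add: rmulT_def concat_map_concat comp_def)

lemma lmulT_concat_map:
  "lmulT cop S act mu a (concat (map F xs)) = concat (map (\<lambda>x. lmulT cop S act mu a (F x)) xs)"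
  by (simp add: lmulT_def concat_map_concat comp_def)

lemma rmulT_tscal: "rmulT cop S act mu (tscal sV d X) c = tscal sV d (rmulT cop S act mu X c)"
  by (simp add: rmulT_def tscal_def map_concat comp_def split_def mu_sV_left)

lemma lmulT_tscal: "lmulT cop S act mu a (tscal sV d X) = tscal sV d (lmulT cop S act mu a X)"
  by (simp add: lmulT_def tscal_def map_concat comp_def split_def mu_sV_right)

lemma lmulT_sV: "lmulT cop S act mu (sV d a) X = tscal sV d (lmulT cop S act mu a X)"
  by (simp add: lmulT_def tscal_def map_concat comp_def split_def mu_sV_left act_sV)

end

section \<open>Poisson pseudoalgebras\<close>

lemma concat_concat_map_map:
  "concat (concat (map (\<lambda>i. map (F i) ys) xs)) = concat (map (\<lambda>i. concat (map (F i) ys)) xs)"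
  by (induct xs) simp_all

lemma vprod_snoc: "xs \<noteq> [] \<Longrightarrow> vprod mul (xs @ [y]) = mul (vprod mul xs) y"
  by (cases xs) (simp_all add: vprod_def)

lemma vprodO_eq: "vprodO mul xs = (if xs = [] then None else Some (vprod mul xs))"
  by (cases xs) (simp_all add: vprod_def)

lemma minus_one_power_cong: "even m = even n \<Longrightarrow> (-1::'k::ring_1) ^ m = (-1) ^ n"
  by (simp add: minus_one_power_iff)

lemma upt_split: "1 \<le> i \<Longrightarrow> i \<le> m \<Longrightarrow> [1..<m+1] = [1..<i] @ i # [i+1..<m+1]"
  using upt_add_eq_append[of 1 i "m + 1 - i"] upt_conv_Cons[of i "m + 1"] by simp

text \<open>Sign bookkeeping when the factor \<open>a\<^sub>m\<^sub>+\<^sub>1\<close> joins a left product from which \<open>a\<^sub>i\<close> is omitted.\<close>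
lemma minus_one_power_snoc_left:
  fixes pa :: "nat \<Rightarrow> nat"
  assumes "1 \<le> i" "i \<le> m"
  shows "(-1::'k::ring_1) ^ ((\<Sum>k\<leftarrow>[1..<m+1]. pa k) * pa (Suc m))
      * ((-1) ^ (pa i * (\<Sum>k=i+1..m. pa k) + e) * (-1) ^ (pa (Suc m) * (\<Sum>k\<leftarrow>[1..<i] @ [i+1..<m+1]. pa k)))
    = (-1) ^ (pa i * (\<Sum>k=i+1..Suc m. pa k) + e)"
proof -
  define R where "R = (\<Sum>k\<leftarrow>[1..<i] @ [i+1..<m+1]. pa k)"
  have total: "(\<Sum>k\<leftarrow>[1..<m+1]. pa k) = pa i + R"
    unfolding R_def upt_split[OF assms] by simp
  have tail: "(\<Sum>k=i+1..Suc m. pa k) = (\<Sum>k=i+1..m. pa k) + pa (Suc m)"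
    using assms by simp
  show ?thesis
    unfolding total tail R_def[symmetric] power_add[symmetric]
    by (rule minus_one_power_cong) (auto simp: even_add even_mult_iff algebra_simps)
qed

locale poisson_pseudoalgebra = hopf_module sH cop eps S sV act
  for sH :: "'k::field_char_0 \<Rightarrow> 'h::ring_1 \<Rightarrow> 'h" and cop :: "'h \<Rightarrow> ('h \<times> 'h) list"
    and eps :: "'h \<Rightarrow> 'k" and S :: "'h \<Rightarrow> 'h" and sV :: "'k \<Rightarrow> 'v::ab_group_add \<Rightarrow> 'v"
    and act :: "'h \<Rightarrow> 'v \<Rightarrow> 'v" +
  fixes V0 V1 :: "'v set" and mul :: "'v \<Rightarrow> 'v \<Rightarrow> 'v" and br :: "'v \<Rightarrow> 'v \<Rightarrow> ('h \<times> 'h \<times> 'v) list"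
  assumes poisson: "poisson_pseudoalg sH cop eps S sV act V0 V1 mul br"
begin

lemmas poisson_axioms = poisson[unfolded poisson_pseudoalg_def]

lemma
  shows mul_add_left: "mul (a + a') b = mul a b + mul a' b"
    and mul_add_right: "mul a (b + b') = mul a b + mul a b'"
    and mul_sV_left: "mul (sV c a) b = sV c (mul a b)"
    and mul_sV_right: "mul a (sV c b) = sV c (mul a b)"
    and mul_assoc: "mul (mul a b) d = mul a (mul b d)"
    and act_mul: "act h (mul a b) = (\<Sum>(x, y)\<leftarrow>cop h. mul (act x a) (act y b))"
  using poisson_axioms by auto

lemma mul_Vp: "a \<in> Vp V0 V1 i \<Longrightarrow> b \<in> Vp V0 V1 j \<Longrightarrow> mul a b \<in> Vp V0 V1 (i + j)"
  using poisson_axioms by meson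

lemma mul_supercommute: "a \<in> Vp V0 V1 i \<Longrightarrow> b \<in> Vp V0 V1 j \<Longrightarrow> mul a b = sV ((-1) ^ (i * j)) (mul b a)"
  using poisson_axioms by meson

lemma bracket_Vp:
  "a \<in> Vp V0 V1 i \<Longrightarrow> b \<in> Vp V0 V1 j \<Longrightarrow> \<exists>X. br a b \<approx> X \<and> (\<forall>(f, g, v)\<in>set X. v \<in> Vp V0 V1 (i + j))"
  using poisson_axioms by meson

lemma skew_symmetry:
  "a \<in> Vp V0 V1 i \<Longrightarrow> b \<in> Vp V0 V1 j \<Longrightarrow> br b a \<approx> tscal sV (- ((-1) ^ (i * j))) (tswap (br a b))"
  using poisson_axioms by meson

lemma leibniz:
  "a \<in> Vp V0 V1 i \<Longrightarrow> b \<in> Vp V0 V1 j \<Longrightarrow>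
   br x (mul a b) \<approx> rmulT cop S act mul (br x a) b @ tscal sV ((-1) ^ (i * j)) (rmulT cop S act mul (br x b) a)"
  using poisson_axioms by meson

lemma act_Vp: "a \<in> Vp V0 V1 i \<Longrightarrow> act h a \<in> Vp V0 V1 i"
proof -
  have "\<forall>h. \<forall>v\<in>V0. act h v \<in> V0" "\<forall>h. \<forall>v\<in>V1. act h v \<in> V1"
    using poisson_axioms by meson+
  then show "a \<in> Vp V0 V1 i \<Longrightarrow> act h a \<in> Vp V0 V1 i" by (simp add: Vp_def split: if_splits)
qed

sublocale hopf_module_product sH cop eps S sV act mul
  by unfold_locales (simp_all add: mul_add_left mul_add_right mul_sV_left mul_sV_right act_mul)

lemma tswap_rmulT_supercommute:
  assumes "\<forall>(f, g, v)\<in>set X. v \<in> Vp V0 V1 p" and "c \<in> Vp V0 V1 q"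
  shows "tswap (rmulT cop S act mul X c) = tscal sV ((-1) ^ (p * q)) (lmulT cop S act mul c (tswap X))"
  using assms(1)
proof (induct X)
  case (Cons t X)
  obtain f g v where t: "t = (f, g, v)" by (cases t)
  have "v \<in> Vp V0 V1 p" using Cons(2) t by auto
  then have "mul v (act (S y) c) = sV ((-1) ^ (p * q)) (mul (act (S y) c) v)" for y
    by (rule mul_supercommute[OF _ act_Vp[OF assms(2)]])
  then have "tswap (rmulT cop S act mul [t] c) = tscal sV ((-1) ^ (p * q)) (lmulT cop S act mul c (tswap [t]))"
    by (simp add: t rmulT_def lmulT_def tscal_def tswap_def comp_def split_def)
  then show ?case
    using Cons rmulT_append[of "[t]" X c] lmulT_append[of c "tswap [t]" "tswap X"] by (simp add: tswap_def)
qed (simp add: rmulT_def lmulT_def tscal_def tswap_def)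

text \<open>Skew-symmetry turns a right product on \<open>[B * A]\<close> into a left product on \<open>[A * B]\<close>.\<close>
lemma tswap_rmulT_bracket:
  assumes A: "A \<in> Vp V0 V1 p" and B: "B \<in> Vp V0 V1 q" and c: "c \<in> Vp V0 V1 r"
  shows "tswap (rmulT cop S act mul (br B A) c)
    \<approx> tscal sV (- ((-1) ^ ((q + p) * r + p * q))) (lmulT cop S act mul c (br A B))"
proof -
  obtain X where X: "br B A \<approx> X" "\<forall>(f, g, v)\<in>set X. v \<in> Vp V0 V1 (q + p)"
    using bracket_Vp[OF B A] by blast
  have "tswap (rmulT cop S act mul (br B A) c) \<approx> tswap (rmulT cop S act mul X c)"
    by (intro eq_T_tswap rmulT_cong X(1))
  also have "\<dots> = tscal sV ((-1) ^ ((q + p) * r)) (lmulT cop S act mul c (tswap X))"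
    by (rule tswap_rmulT_supercommute[OF X(2) c])
  also have "\<dots> \<approx> tscal sV ((-1) ^ ((q + p) * r)) (lmulT cop S act mul c (tscal sV (- ((-1) ^ (p * q))) (br A B)))"
  proof (intro eq_T_tscal lmulT_cong)
    have "tswap X \<approx> tswap (br B A)" by (intro eq_T_tswap eq_T_sym[OF X(1)])
    also have "\<dots> \<approx> tswap (tscal sV (- ((-1) ^ (p * q))) (tswap (br A B)))"
      by (intro eq_T_tswap skew_symmetry[OF A B])
    finally show "tswap X \<approx> tscal sV (- ((-1) ^ (p * q))) (br A B)" by (simp add: tswap_tscal)
  qed
  finally show ?thesis by (simp add: lmulT_tscal power_add)
qed

lemma leibniz_left:
  assumes A: "A \<in> Vp V0 V1 p" and a: "a \<in> Vp V0 V1 r" and B: "B \<in> Vp V0 V1 q"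
  shows "br (mul A a) B
    \<approx> tscal sV ((-1) ^ (p * r)) (lmulT cop S act mul a (br A B)) @ lmulT cop S act mul A (br a B)"
proof -
  let ?c = "- ((-1::'k) ^ (q * (p + r)))"
  have "br (mul A a) B \<approx> tscal sV ?c (tswap (br B (mul A a)))"
    by (rule skew_symmetry[OF B mul_Vp[OF A a]])
  also have "\<dots> \<approx> tscal sV ?c (tswap (rmulT cop S act mul (br B A) a
      @ tscal sV ((-1) ^ (p * r)) (rmulT cop S act mul (br B a) A)))"
    by (intro eq_T_tscal eq_T_tswap leibniz[OF A a])
  also have "\<dots> \<approx> tscal sV ?c (tscal sV (- ((-1) ^ ((q + p) * r + p * q))) (lmulT cop S act mul a (br A B)))
      @ tscal sV ?c (tscal sV ((-1) ^ (p * r))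
          (tscal sV (- ((-1) ^ ((q + r) * p + r * q))) (lmulT cop S act mul A (br a B))))"
    by (simp only: tswap_append tswap_tscal tscal_append) (intro eq_T_append eq_T_tscal tswap_rmulT_bracket A a B)
  also have "\<dots> = tscal sV ((-1) ^ (p * r)) (lmulT cop S act mul a (br A B)) @ lmulT cop S act mul A (br a B)"
  proof -
    have s1: "?c * - ((-1) ^ ((q + p) * r + p * q)) = (-1) ^ (p * r)"
      by (simp add: power_add[symmetric]) (rule minus_one_power_cong, auto simp: even_add even_mult_iff)
    have s2: "?c * ((-1) ^ (p * r) * - ((-1) ^ ((q + r) * p + r * q))) = 1"
      by (simp add: power_add[symmetric])
         (rule minus_one_power_cong[where n = 0, simplified], auto simp: even_add even_mult_iff)
    show ?thesis by (simp only: tscal_tscal s1 s2 tscal_one)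
  qed
  finally show ?thesis .
qed

lemma vprod_Vp:
  "xs \<noteq> [] \<Longrightarrow> \<forall>k\<in>set xs. a k \<in> Vp V0 V1 (pa k) \<Longrightarrow> vprod mul (map a xs) \<in> Vp V0 V1 (\<Sum>k\<leftarrow>xs. pa k)"
proof (induct xs rule: rev_induct)
  case (snoc x xs)
  then show ?case
    by (cases "xs = []") (simp_all add: vprod_def vprod_snoc mul_Vp)
qed simp

lemma rmulT_rmulO_snoc:
  "rmulT cop S act mul (rmulO cop S act mul Y (vprodO mul xs)) c \<approx> rmulO cop S act mul Y (vprodO mul (xs @ [c]))"
  using rmulT_assoc[OF mul_assoc, of Y "vprod mul xs" c]
  by (cases "xs = []") (simp_all add: rmulO_def vprodO_eq vprod_snoc vprod_def)

lemma lmulT_lmulO_snoc: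
  assumes "\<forall>k\<in>set ks. a k \<in> Vp V0 V1 (pa k)" and "c \<in> Vp V0 V1 q"
  shows "lmulT cop S act mul c (lmulO cop S act mul (vprodO mul (map a ks)) Z)
    \<approx> tscal sV ((-1) ^ (q * (\<Sum>k\<leftarrow>ks. pa k))) (lmulO cop S act mul (vprodO mul (map a ks @ [c])) Z)"
proof (cases "ks = []")
  case False
  let ?P = "vprod mul (map a ks)"
  have "lmulT cop S act mul c (lmulT cop S act mul ?P Z) \<approx> lmulT cop S act mul (mul c ?P) Z"
    by (rule lmulT_assoc[OF mul_assoc])
  also have "mul c ?P = sV ((-1) ^ (q * (\<Sum>k\<leftarrow>ks. pa k))) (mul ?P c)"
    by (rule mul_supercommute[OF assms(2) vprod_Vp[OF False assms(1)]])
  finally show ?thesis using False by (simp add: lmulO_def vprodO_eq vprod_snoc lmulT_sV)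
qed (simp add: lmulO_def vprod_def)

lemma rmulT_expansion_snoc:
  "rmulT cop S act mul (concat (map (\<lambda>j. tscal sV (\<sigma> j) (rmulO cop S act mul (Y j) (vprodO mul (L j)))) js)) c
   \<approx> concat (map (\<lambda>j. tscal sV (\<sigma> j) (rmulO cop S act mul (Y j) (vprodO mul (L j @ [c])))) js)"
  unfolding rmulT_concat_map rmulT_tscal by (intro eq_T_concat_map eq_T_tscal rmulT_rmulO_snoc)

lemma bracket_right_products:
  assumes "1 \<le> n" and "\<forall>j\<in>{1..n}. b j \<in> Vp V0 V1 (pb j)"
  shows "br x (vprod mul (map b [1..<n+1])) \<approx>
    concat (map (\<lambda>j. tscal sV ((-1) ^ (pb j * (\<Sum>k=1..<j. pb k)))
      (rmulO cop S act mul (br x (b j)) (vprodO mul (map b ([1..<j] @ [j+1..<n+1]))))) [1..<n+1])"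
  using assms
proof (induct n rule: nat_induct_at_least)
  case base
  then show ?case by (simp add: rmulO_def vprod_def)
next
  case (Suc n)
  define \<sigma> where "\<sigma> j = (-1::'k) ^ (pb j * (\<Sum>k=1..<j. pb k))" for j
  define B where "B = vprod mul (map b [1..<n+1])"
  define pB where "pB = (\<Sum>k\<leftarrow>[1..<n+1]. pb k)"
  let ?b = "b (Suc n)"
  let ?terms = "\<lambda>n'. concat (map (\<lambda>j. tscal sV (\<sigma> j)
      (rmulO cop S act mul (br x (b j)) (vprodO mul (map b ([1..<j] @ [j+1..<n'+1]))))) [1..<n+1])"
  have B: "B \<in> Vp V0 V1 pB" unfolding B_def pB_def using Suc by (intro vprod_Vp) auto
  have b: "?b \<in> Vp V0 V1 (pb (Suc n))" using Suc by auto
  have "br x B \<approx> ?terms n"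
    using Suc unfolding B_def \<sigma>_def by auto
  then have "rmulT cop S act mul (br x B) ?b \<approx> concat (map (\<lambda>j. tscal sV (\<sigma> j)
      (rmulO cop S act mul (br x (b j)) (vprodO mul (map b ([1..<j] @ [j+1..<n+1]) @ [?b])))) [1..<n+1])"
    by (rule eq_T_trans[OF rmulT_cong rmulT_expansion_snoc])
  also have "\<dots> = ?terms (Suc n)"
    by (intro arg_cong[where f = concat] map_cong) auto
  finally have first: "rmulT cop S act mul (br x B) ?b \<approx> ?terms (Suc n)" .
  have "pB = (\<Sum>k=1..<Suc n. pb k)"
    by (simp only: pB_def interv_sum_list_conv_sum_set_nat Suc_eq_plus1 set_upt)
  then have last: "tscal sV ((-1) ^ (pB * pb (Suc n))) (rmulT cop S act mul (br x ?b) B)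
      = tscal sV (\<sigma> (Suc n)) (rmulO cop S act mul (br x ?b) (vprodO mul (map b ([1..<Suc n] @ [Suc n+1..<Suc n+1]))))"
    using Suc(1) by (simp add: \<sigma>_def B_def rmulO_def vprodO_eq mult.commute)
  have "map b [1..<n+1] \<noteq> []" using Suc(1) by simp
  then have "vprod mul (map b [1..<n+1] @ [?b]) = mul B ?b" unfolding B_def by (rule vprod_snoc)
  moreover have "map b [1..<Suc n+1] = map b [1..<n+1] @ [?b]" by simp
  ultimately have "br x (vprod mul (map b [1..<Suc n+1])) = br x (mul B ?b)" by (simp only:)
  also have "\<dots> \<approx> rmulT cop S act mul (br x B) ?b @ tscal sV ((-1) ^ (pB * pb (Suc n))) (rmulT cop S act mul (br x ?b) B)"
    by (rule leibniz[OF B b])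
  also have "\<dots> \<approx> ?terms (Suc n) @ tscal sV (\<sigma> (Suc n))
      (rmulO cop S act mul (br x ?b) (vprodO mul (map b ([1..<Suc n] @ [Suc n+1..<Suc n+1]))))"
    unfolding last by (rule eq_T_append[OF first eq_T_refl])
  also have "\<dots> = concat (map (\<lambda>j. tscal sV (\<sigma> j)
      (rmulO cop S act mul (br x (b j)) (vprodO mul (map b ([1..<j] @ [j+1..<Suc n+1]))))) [1..<Suc n+1])"
    by simp
  finally show ?case unfolding \<sigma>_def .
qed

lemma lmulT_left_factor_snoc:
  assumes "1 \<le> i" "i \<le> m" and "\<forall>k\<in>{1..Suc m}. a k \<in> Vp V0 V1 (pa k)"
  shows "tscal sV ((-1) ^ ((\<Sum>k\<leftarrow>[1..<m+1]. pa k) * pa (Suc m))) (tscal sV ((-1) ^ (pa i * (\<Sum>k=i+1..m. pa k) + e))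
      (lmulT cop S act mul (a (Suc m)) (lmulO cop S act mul (vprodO mul (map a ([1..<i] @ [i+1..<m+1]))) Z)))
    \<approx> tscal sV ((-1) ^ (pa i * (\<Sum>k=i+1..Suc m. pa k) + e))
      (lmulO cop S act mul (vprodO mul (map a ([1..<i] @ [i+1..<Suc m+1]))) Z)"
proof -
  let ?omit = "[1..<i] @ [i+1..<m+1]"
  have "map a ?omit @ [a (Suc m)] = map a ([1..<i] @ [i+1..<Suc m+1])" using assms(1,2) by auto
  moreover have "\<forall>k\<in>set ?omit. a k \<in> Vp V0 V1 (pa k)" and "a (Suc m) \<in> Vp V0 V1 (pa (Suc m))"
    using assms by auto
  ultimately have "lmulT cop S act mul (a (Suc m)) (lmulO cop S act mul (vprodO mul (map a ?omit)) Z)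
      \<approx> tscal sV ((-1) ^ (pa (Suc m) * (\<Sum>k\<leftarrow>?omit. pa k)))
          (lmulO cop S act mul (vprodO mul (map a ([1..<i] @ [i+1..<Suc m+1]))) Z)"
    using lmulT_lmulO_snoc by metis
  then have "tscal sV ((-1) ^ ((\<Sum>k\<leftarrow>[1..<m+1]. pa k) * pa (Suc m))) (tscal sV ((-1) ^ (pa i * (\<Sum>k=i+1..m. pa k) + e))
      (lmulT cop S act mul (a (Suc m)) (lmulO cop S act mul (vprodO mul (map a ?omit)) Z)))
    \<approx> tscal sV ((-1) ^ ((\<Sum>k\<leftarrow>[1..<m+1]. pa k) * pa (Suc m))) (tscal sV ((-1) ^ (pa i * (\<Sum>k=i+1..m. pa k) + e))
      (tscal sV ((-1) ^ (pa (Suc m) * (\<Sum>k\<leftarrow>?omit. pa k)))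
        (lmulO cop S act mul (vprodO mul (map a ([1..<i] @ [i+1..<Suc m+1]))) Z)))"
    by (intro eq_T_tscal)
  then show ?thesis
    by (simp only: tscal_tscal minus_one_power_snoc_left[OF assms(1,2)])
qed

text \<open>The \<open>i\<close>-th row of the claimed expansion of \<open>[(a\<^sub>1\<cdots>a\<^sub>m) * (b\<^sub>1\<cdots>b\<^sub>n)]\<close>.\<close>
definition expansion_row :: "(nat \<Rightarrow> 'v) \<Rightarrow> (nat \<Rightarrow> nat) \<Rightarrow> nat \<Rightarrow> (nat \<Rightarrow> 'v) \<Rightarrow> (nat \<Rightarrow> nat) \<Rightarrow> nat
    \<Rightarrow> nat \<Rightarrow> ('h \<times> 'h \<times> 'v) list" where
  "expansion_row a pa m b pb n i = concat (map (\<lambda>j.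
     tscal sV ((-1) ^ (pa i * (\<Sum>k=i+1..m. pa k) + pb j * (\<Sum>k=1..<j. pb k)))
       (lmulO cop S act mul (vprodO mul (map a ([1..<i] @ [i+1..<m+1])))
         (rmulO cop S act mul (br (a i) (b j)) (vprodO mul (map b ([1..<j] @ [j+1..<n+1])))))) [1..<n+1])"

lemma lmulT_expansion_row:
  assumes "1 \<le> i" "i \<le> m" and "\<forall>k\<in>{1..Suc m}. a k \<in> Vp V0 V1 (pa k)"
  shows "tscal sV ((-1) ^ ((\<Sum>k\<leftarrow>[1..<m+1]. pa k) * pa (Suc m)))
      (lmulT cop S act mul (a (Suc m)) (expansion_row a pa m b pb n i))
    \<approx> expansion_row a pa (Suc m) b pb n i"
  unfolding expansion_row_def lmulT_concat_map lmulT_tscal tscal_concat_map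
  by (intro eq_T_concat_map lmulT_left_factor_snoc assms)

lemma lmulT_expansion_last_row:
  assumes "1 \<le> m" and "1 \<le> n" and "\<forall>j\<in>{1..n}. b j \<in> Vp V0 V1 (pb j)"
  shows "lmulT cop S act mul (vprod mul (map a [1..<m+1])) (br (a (Suc m)) (vprod mul (map b [1..<n+1])))
    \<approx> expansion_row a pa (Suc m) b pb n (Suc m)"
proof -
  let ?Z = "\<lambda>j. rmulO cop S act mul (br (a (Suc m)) (b j)) (vprodO mul (map b ([1..<j] @ [j+1..<n+1])))"
  have "lmulT cop S act mul (vprod mul (map a [1..<m+1])) (br (a (Suc m)) (vprod mul (map b [1..<n+1])))
      \<approx> lmulT cop S act mul (vprod mul (map a [1..<m+1]))
          (concat (map (\<lambda>j. tscal sV ((-1) ^ (pb j * (\<Sum>k=1..<j. pb k))) (?Z j)) [1..<n+1]))"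
    by (intro lmulT_cong bracket_right_products assms(2,3))
  also have "\<dots> = expansion_row a pa (Suc m) b pb n (Suc m)"
    using assms(1) by (simp add: lmulT_concat_map lmulT_tscal expansion_row_def lmulO_def vprodO_eq)
  finally show ?thesis .
qed

lemma bracket_products:
  assumes "1 \<le> m" and "1 \<le> n"
    and "\<forall>i\<in>{1..m}. a i \<in> Vp V0 V1 (pa i)" and "\<forall>j\<in>{1..n}. b j \<in> Vp V0 V1 (pb j)"
  shows "br (vprod mul (map a [1..<m+1])) (vprod mul (map b [1..<n+1]))
    \<approx> concat (map (expansion_row a pa m b pb n) [1..<m+1])"
  using assms(1,3)
proof (induct m rule: nat_induct_at_least)
  case base
  show ?case
    using bracket_right_products[OF assms(2,4), of "a 1"] by (simp add: expansion_row_def lmulO_def vprod_def)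
next
  case (Suc m)
  define A where "A = vprod mul (map a [1..<m+1])"
  define pA where "pA = (\<Sum>k\<leftarrow>[1..<m+1]. pa k)"
  define B where "B = vprod mul (map b [1..<n+1])"
  define pB where "pB = (\<Sum>k\<leftarrow>[1..<n+1]. pb k)"
  let ?a = "a (Suc m)"
  have A: "A \<in> Vp V0 V1 pA" unfolding A_def pA_def using Suc by (intro vprod_Vp) auto
  have a: "?a \<in> Vp V0 V1 (pa (Suc m))" using Suc by auto
  have B: "B \<in> Vp V0 V1 pB" unfolding B_def pB_def using assms(2,4) by (intro vprod_Vp) auto
  have "br A B \<approx> concat (map (expansion_row a pa m b pb n) [1..<m+1])"
    using Suc unfolding A_def B_def by auto
  then have "tscal sV ((-1) ^ (pA * pa (Suc m))) (lmulT cop S act mul ?a (br A B))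
      \<approx> tscal sV ((-1) ^ (pA * pa (Suc m))) (lmulT cop S act mul ?a (concat (map (expansion_row a pa m b pb n) [1..<m+1])))"
    by (intro eq_T_tscal lmulT_cong)
  also have "\<dots> \<approx> concat (map (expansion_row a pa (Suc m) b pb n) [1..<m+1])"
    unfolding lmulT_concat_map tscal_concat_map pA_def using Suc by (intro eq_T_concat_map lmulT_expansion_row) auto
  finally have left: "tscal sV ((-1) ^ (pA * pa (Suc m))) (lmulT cop S act mul ?a (br A B))
      \<approx> concat (map (expansion_row a pa (Suc m) b pb n) [1..<m+1])" .
  have "br (mul A ?a) B
      \<approx> tscal sV ((-1) ^ (pA * pa (Suc m))) (lmulT cop S act mul ?a (br A B)) @ lmulT cop S act mul A (br ?a B)"
    by (rule leibniz_left[OF A a B])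
  also have "\<dots> \<approx> concat (map (expansion_row a pa (Suc m) b pb n) [1..<m+1]) @ expansion_row a pa (Suc m) b pb n (Suc m)"
    using left lmulT_expansion_last_row[OF Suc(1) assms(2,4)] unfolding A_def B_def by (rule eq_T_append)
  finally have "br (mul A ?a) B
      \<approx> concat (map (expansion_row a pa (Suc m) b pb n) [1..<m+1]) @ expansion_row a pa (Suc m) b pb n (Suc m)" .
  moreover have "map a [1..<m+1] \<noteq> []" using Suc(1) by simp
  then have "vprod mul (map a [1..<m+1] @ [?a]) = mul A ?a" unfolding A_def by (rule vprod_snoc)
  moreover have "[1..<Suc m+1] = [1..<m+1] @ [Suc m]" by simp
  ultimately show ?case unfolding B_def by simp
qed

end

theorem proposition4p9:
  fixes sH :: "'k::field_char_0 \<Rightarrow> 'h::ring_1 \<Rightarrow> 'h"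
    and cop :: "'h \<Rightarrow> ('h \<times> 'h) list" and eps :: "'h \<Rightarrow> 'k" and S :: "'h \<Rightarrow> 'h"
    and sV :: "'k \<Rightarrow> 'v::ab_group_add \<Rightarrow> 'v" and act :: "'h \<Rightarrow> 'v \<Rightarrow> 'v"
    and V0 V1 :: "'v set" and mul :: "'v \<Rightarrow> 'v \<Rightarrow> 'v"
    and br :: "'v \<Rightarrow> 'v \<Rightarrow> ('h \<times> 'h \<times> 'v) list"
    and a b :: "nat \<Rightarrow> 'v" and pa pb :: "nat \<Rightarrow> nat" and m n :: nat
  assumes "cocomm_hopf sH cop eps S"
    and "poisson_pseudoalg sH cop eps S sV act V0 V1 mul br"
    and "1 \<le> m" and "1 \<le> n"
    and "\<forall>i\<in>{1..m}. a i \<in> Vp V0 V1 (pa i)"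
    and "\<forall>j\<in>{1..n}. b j \<in> Vp V0 V1 (pb j)"
  shows "eq_T sH cop sV act
     (br (vprod mul (map a [1..<m+1])) (vprod mul (map b [1..<n+1])))
     (concat [tscal sV ((-1::'k) ^ (pa i * (\<Sum>k=i+1..m. pa k) + pb j * (\<Sum>k=1..<j. pb k)))
                (lmulO cop S act mul (vprodO mul (map a ([1..<i] @ [i+1..<m+1])))
                  (rmulO cop S act mul (br (a i) (b j)) (vprodO mul (map b ([1..<j] @ [j+1..<n+1]))))).
              i \<leftarrow> [1..<m+1], j \<leftarrow> [1..<n+1]])"
proof -
  interpret poisson_pseudoalgebra sH cop eps S sV act V0 V1 mul br
  proof unfold_locales
    show "cocomm_hopf sH cop eps S" by fact
    show "poisson_pseudoalg sH cop eps S sV act V0 V1 mul br" by fact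
  qed (use assms(2)[unfolded poisson_pseudoalg_def] in simp_all)
  have "br (vprod mul (map a [1..<m+1])) (vprod mul (map b [1..<n+1]))
      \<approx> concat (map (expansion_row a pa m b pb n) [1..<m+1])"
    using assms(3-) by (rule bracket_products)
  then show ?thesis by (simp only: expansion_row_def[abs_def] concat_concat_map_map)
qed

end
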